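(* Let $U\subset\mathbb R^n$ be open, $Y$ a finite dimensional normed vector space, $D\subset Y$ closed, $K\subset Y\setminus D$ compact, $V\in\mathbf V_m(U)$ with $\|\delta V\|$ a Radon measure and $\|\delta V\|_{\mathrm{sing}}=0$ (singular part with respect to $\|V\|$), and $f\in\mathbf T(V,Y)$ such that $\|V\|(U\setminus f^{-1}[D\cup K])=0$ and $\|V\|(f^{-1}[K])>0$. Then there exists a partitioned component $W\in\mathbf V_m(U)$ of $V$ in $U$ such that (1) $\|W\|(U\setminus f^{-1}[K])=0$, and (2) $f\in\mathbf T(W,Y)$.
   Context: Notation: $\mathbf V_m(U)$ the $m$-dimensional varifolds in $U$; $\|V\|$ weight, $\delta V$ first variation, $\|\delta V\|$ its total variation. $V\partial E=(\delta V)\llcorner E-\delta(V\llcorner(E\times\mathbf G(n,m)))$ for $(\|V\|+\|\delta V\|)$-measurable $E\subset U$. A partitioned component of $V$ in $U$ is $W=V\llcorner(E\times\mathbf G(n,m))$ with $\|V\|(E)>0$ and $V\partial E=0$. $\mathbf T(V,Y)$ denotes the class of generalised $V$-weakly differentiable $Y$-valued functions in the sense of Menne (Definition 8.3 of "Weakly differentiable functions on varifolds", Indiana Univ. Math. J. 2016): roughly, $f$ is $(\|V\|+\|\delta V\|)$-measurable with the local integrability conditions of that definition, and there exists a $\|V\|$-measurable $\operatorname{Hom}(\mathbb R^n,Y)$-valued function $V\mathbf Df$ (the generalised $V$-weak derivative) such that for all $\theta\in C^\infty_c(U,\mathbb R^n)$ and all smooth $\gamma:Y\to\mathbb R$ with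 $\operatorname{spt}D\gamma$ compact, $$\delta V((\gamma\circ f)\theta)=\int\gamma(f(x))\,P_\natural\bullet D\theta(x)\,dV(x,P)+\int\langle\theta(x),D\gamma(f(x))\circ V\mathbf Df(x)\rangle\,d\|V\|(x),$$ where $P_\natural$ is the orthogonal projection onto $P$. *)

theory Defs
  imports "HOL-Analysis.Analysis"
begin

coinductive smooth_on :: "'a::real_normed_vector set \<Rightarrow> ('a \<Rightarrow> 'b::real_normed_vector) \<Rightarrow> bool"
  where
  "f differentiable_on S \<Longrightarrow> (\<And>v. smooth_on S (\<lambda>x. frechet_derivative f (at x) v))
     \<Longrightarrow> smooth_on S f"

definition support_of :: "('a::real_normed_vector \<Rightarrow> 'b::real_normed_vector) \<Rightarrow> 'a set" where
  "support_of f = closure {x. f x \<noteq> 0}"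

text \<open>Test vector fields \<open>\<D>(U,R^n)\<close> (extended by zero outside U).\<close>
definition test_field :: "'a::euclidean_space set \<Rightarrow> ('a \<Rightarrow> 'a) \<Rightarrow> bool" where
  "test_field U \<theta> \<longleftrightarrow> smooth_on UNIV \<theta> \<and> compact (support_of \<theta>) \<and> support_of \<theta> \<subseteq> U"

definition admissible_gamma :: "('y::euclidean_space \<Rightarrow> real) \<Rightarrow> bool" where
  "admissible_gamma \<gamma> \<longleftrightarrow> smooth_on UNIV \<gamma> \<and>
     compact (closure {y. frechet_derivative \<gamma> (at y) \<noteq> (\<lambda>_. 0)})"

text \<open>G(n,m), each m-dimensional subspace P identified with the orthogonal
  projection onto P.\<close>
definition grass :: "nat \<Rightarrow> ('a::euclidean_space \<Rightarrow>\<^sub>L 'a) set" where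
  "grass m = {P :: 'a \<Rightarrow>\<^sub>L 'a. (\<forall>x. blinfun_apply P (blinfun_apply P x) = blinfun_apply P x) \<and> (\<forall>x y. inner (blinfun_apply P x) y = inner x (blinfun_apply P y))
                 \<and> dim (range (blinfun_apply P)) = m}"

definition radon_on :: "'a::euclidean_space set \<Rightarrow> 'a measure \<Rightarrow> bool" where
  "radon_on U \<mu> \<longleftrightarrow> sets \<mu> = sets borel \<and> emeasure \<mu> (- U) = 0 \<and>
     (\<forall>C. compact C \<and> C \<subseteq> U \<longrightarrow> emeasure \<mu> C < \<infinity>)"

definition varifold :: "'a::euclidean_space set \<Rightarrow> nat \<Rightarrow> ('a \<times> ('a \<Rightarrow>\<^sub>L 'a)) measure \<Rightarrow> bool" where
  "varifold U m V \<longleftrightarrow> sets V = sets borel \<and> emeasure V (- (U \<times> grass m)) = 0 \<and>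
     (\<forall>C. compact C \<and> C \<subseteq> U \<longrightarrow> emeasure V (C \<times> UNIV) < \<infinity>)"

definition weight :: "('a::euclidean_space \<times> ('a \<Rightarrow>\<^sub>L 'a)) measure \<Rightarrow> 'a measure" where
  "weight V = distr V borel fst"

definition proj_div :: "('a::euclidean_space \<Rightarrow> 'a) \<Rightarrow> 'a \<Rightarrow> ('a \<Rightarrow>\<^sub>L 'a) \<Rightarrow> real" where
  "proj_div \<theta> x P = (\<Sum>b\<in>Basis. inner (blinfun_apply P (frechet_derivative \<theta> (at x) b)) b)"

definition first_variation :: "('a::euclidean_space \<times> ('a \<Rightarrow>\<^sub>L 'a)) measure \<Rightarrow> ('a \<Rightarrow> 'a) \<Rightarrow> real" where
  "first_variation V \<theta> = integral\<^sup>L V (\<lambda>(x, P). proj_div \<theta> x P)"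

text \<open>\<open>\<parallel>\<delta>V\<parallel>\<close> is a Radon measure, represented by \<open>\<mu> = \<parallel>\<delta>V\<parallel>\<close> and a \<mu>-measurable
  unit vector field \<eta> with \<open>\<delta>V(\<theta>) = \<integral> \<langle>\<theta>,\<eta>\<rangle> d\<parallel>\<delta>V\<parallel>\<close>; this representation is
  also how \<open>\<delta>V\<close> is applied to non-smooth (bounded, compactly supported)
  vector fields.\<close>
definition fv_rep :: "'a::euclidean_space set \<Rightarrow> ('a \<times> ('a \<Rightarrow>\<^sub>L 'a)) measure \<Rightarrow> 'a measure \<Rightarrow> ('a \<Rightarrow> 'a) \<Rightarrow> bool" where
  "fv_rep U V \<mu> \<eta> \<longleftrightarrow> radon_on U \<mu> \<and> \<eta> \<in> borel_measurable (completion \<mu>) \<and>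
     (AE x in \<mu>. norm (\<eta> x) = 1) \<and>
     (\<forall>\<theta>. test_field U \<theta> \<longrightarrow> first_variation V \<theta> = integral\<^sup>L \<mu> (\<lambda>x. inner (\<theta> x) (\<eta> x)))"

definition restr_var :: "('a::euclidean_space \<times> ('a \<Rightarrow>\<^sub>L 'a)) measure \<Rightarrow> 'a set \<Rightarrow> ('a \<times> ('a \<Rightarrow>\<^sub>L 'a)) measure" where
  "restr_var V E = measure_of UNIV (sets borel) (\<lambda>A. emeasure (completion V) (A \<inter> (E \<times> UNIV)))"

text \<open>E is \<open>(\<parallel>V\<parallel> + \<parallel>\<delta>V\<parallel>)\<close>-measurable.\<close>
definition meas_set :: "('a::euclidean_space \<times> ('a \<Rightarrow>\<^sub>L 'a)) measure \<Rightarrow> 'a measure \<Rightarrow> 'a set \<Rightarrow> bool" where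
  "meas_set V \<mu> E \<longleftrightarrow> E \<in> sets (completion (weight V)) \<and> E \<in> sets (completion \<mu>)"

text \<open>\<open>V\<partial>E = (\<delta>V)\<llcorner>E - \<delta>(V\<llcorner>(E\<times>\<G>(n,m))) = 0\<close> on test fields.\<close>
definition boundary_zero :: "'a::euclidean_space set \<Rightarrow> ('a \<times> ('a \<Rightarrow>\<^sub>L 'a)) measure \<Rightarrow> 'a measure \<Rightarrow> ('a \<Rightarrow> 'a) \<Rightarrow> 'a set \<Rightarrow> bool" where
  "boundary_zero U V \<mu> \<eta> E \<longleftrightarrow>
     (\<forall>\<theta>. test_field U \<theta> \<longrightarrow>
        integral\<^sup>L (completion \<mu>) (\<lambda>x. indicator E x * inner (\<theta> x) (\<eta> x))
        - first_variation (restr_var V E) \<theta> = 0)"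

definition partitioned_component :: "'a::euclidean_space set \<Rightarrow> nat \<Rightarrow> ('a \<times> ('a \<Rightarrow>\<^sub>L 'a)) measure \<Rightarrow> ('a \<times> ('a \<Rightarrow>\<^sub>L 'a)) measure \<Rightarrow> bool" where
  "partitioned_component U m V W \<longleftrightarrow>
     (\<exists>E \<mu> \<eta>. fv_rep U V \<mu> \<eta> \<and> E \<subseteq> U \<and> meas_set V \<mu> E \<and>
        emeasure (completion (weight V)) E > 0 \<and> boundary_zero U V \<mu> \<eta> E \<and>
        W = restr_var V E)"

definition gen_weakly_diff :: "'a::euclidean_space set \<Rightarrow> ('a \<times> ('a \<Rightarrow>\<^sub>L 'a)) measure \<Rightarrow> ('a \<Rightarrow> 'y::euclidean_space) \<Rightarrow> bool" where
  "gen_weakly_diff U V f \<longleftrightarrow>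
     (\<exists>\<mu> \<eta>. fv_rep U V \<mu> \<eta> \<and>
        f \<in> borel_measurable (completion (weight V)) \<and> f \<in> borel_measurable (completion \<mu>) \<and>
        (\<forall>C s. compact C \<and> C \<subseteq> U \<and> 0 \<le> s \<longrightarrow>
           emeasure (completion (weight V)) (C \<inter> {x. norm (f x) > s}) < \<infinity> \<and>
           emeasure (completion \<mu>) (C \<inter> {x. norm (f x) > s}) < \<infinity>) \<and>
        (\<exists>F :: 'a \<Rightarrow> ('a \<Rightarrow>\<^sub>L 'y).
           F \<in> borel_measurable (completion (weight V)) \<and>
           (\<forall>C s. compact C \<and> C \<subseteq> U \<and> 0 \<le> s \<longrightarrow>
              (\<integral>\<^sup>+ x. indicator (C \<inter> {x. norm (f x) \<le> s}) x * ennreal (norm (F x))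
                 \<partial>completion (weight V)) < \<infinity>) \<and>
           (\<forall>\<theta> \<gamma>. test_field U \<theta> \<and> admissible_gamma \<gamma> \<longrightarrow>
              integral\<^sup>L (completion \<mu>) (\<lambda>x. \<gamma> (f x) * inner (\<theta> x) (\<eta> x))
              = integral\<^sup>L (completion V) (\<lambda>(x, P). \<gamma> (f x) * proj_div \<theta> x P)
                + integral\<^sup>L (completion (weight V))
                    (\<lambda>x. frechet_derivative \<gamma> (at (f x)) (blinfun_apply (F x) (\<theta> x))))))"

end

(* Choose a smooth \<gamma> : Y \<rightarrow> [0, 1] that is 1 near K and vanishes outside a compact set disjoint from D,
   and put E = U \<inter> f\<inverse>{\<gamma> = 1}.  As f maps \<parallel>V\<parallel>-almost all of U into D \<union> K, where \<gamma> is locally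
   constant, (g \<gamma>^(k+1)) \<circ> f and its derivative agree \<parallel>V\<parallel>-almost everywhere with \<chi>_E (g \<circ> f) and
   \<chi>_E (Dg \<circ> f).  Testing the defining identity of V D f with g \<gamma>^(k+1) and letting k \<rightarrow> \<infinity> on the
   \<parallel>\<delta>V\<parallel>-side by dominated convergence gives that identity restricted to E.  For g = 1 it says
   V\<partial>E = 0, so W = V \<llcorner> (E \<times> G(n, m)) is a partitioned component; for general g it says f \<in> T(W, Y)
   with the same derivative.  Finally \<parallel>W\<parallel> lives on E, which lies in f\<inverse>K up to a \<parallel>V\<parallel>-null set. *)

theory Submission
  imports Defs "HOL-Computational_Algebra.Polynomial"
begin

section \<open>Smooth functions\<close>

lemma frechet_derivative_eq_on_open:
  assumes "open T" "x \<in> T" "\<And>y. y \<in> T \<Longrightarrow> f y = g y"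
  shows "frechet_derivative f (at x) = frechet_derivative g (at x)"
proof -
  have "(f has_derivative D) (at x) \<longleftrightarrow> (g has_derivative D) (at x)" for D
    using has_derivative_transform_within_open[OF _ assms(1,2)] assms(3) by metis
  then show ?thesis unfolding frechet_derivative_def by simp
qed

lemma frechet_derivative_apply:
  "(f has_derivative D) (at x) \<Longrightarrow> frechet_derivative f (at x) v = D v"
  using frechet_derivative_at by metis

lemma has_derivative_real_apply:
  fixes a :: "real \<Rightarrow> real"
  assumes "(a has_derivative D) (at t)"
  shows "D w = D 1 * w"
  using linear_scale[OF has_derivative_linear[OF assms], of w 1] by (simp add: mult.commute)

lemma smooth_on_differentiable_on: "smooth_on S f \<Longrightarrow> f differentiable_on S"
  by (erule smooth_on.cases) auto

lemma smooth_on_frechet_derivative: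
  "smooth_on S f \<Longrightarrow> smooth_on S (\<lambda>x. frechet_derivative f (at x) v)"
  by (erule smooth_on.cases) auto

lemma smooth_on_has_derivative:
  assumes "open S" "x \<in> S" "smooth_on S f"
  shows "(f has_derivative frechet_derivative f (at x)) (at x)"
  using assms smooth_on_differentiable_on differentiable_on_eq_differentiable_at
    frechet_derivative_works by blast

lemma smooth_on_continuous_on: "smooth_on S f \<Longrightarrow> continuous_on S f"
  by (intro differentiable_imp_continuous_on smooth_on_differentiable_on)

lemma smooth_on_coinduct_fixed:
  assumes "P f"
    and "\<And>g. P g \<Longrightarrow> g differentiable_on S \<and>
          (\<forall>v. P (\<lambda>x. frechet_derivative g (at x) v) \<or> smooth_on S (\<lambda>x. frechet_derivative g (at x) v))"
  shows "smooth_on S f"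
  using assms(1)
proof (coinduction arbitrary: f rule: smooth_on.coinduct)
  case (smooth_on f)
  then show ?case using assms(2)[of f] by blast
qed

lemma has_derivative_sum_list:
  assumes "\<And>h. h \<in> set l \<Longrightarrow> h differentiable (at x)"
  shows "((\<lambda>y. \<Sum>h\<leftarrow>l. h y) has_derivative (\<lambda>w. \<Sum>h\<leftarrow>l. frechet_derivative h (at x) w)) (at x)"
  using assms
proof (induction l)
  case Nil
  then show ?case by simp
next
  case (Cons a l)
  have "(a has_derivative frechet_derivative a (at x)) (at x)"
    using Cons.prems frechet_derivative_works by auto
  from has_derivative_add[OF this Cons.IH] Cons.prems show ?case by simp
qed

text \<open>Coinduction up to finite sums.\<close>
lemma smooth_on_coinduct_sum_list:
  fixes P :: "('a::real_normed_vector \<Rightarrow> 'b::real_normed_vector) \<Rightarrow> bool"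
  assumes S: "open S" and "P f"
    and step: "\<And>g. P g \<Longrightarrow> g differentiable_on S \<and>
          (\<forall>v. \<exists>l. (\<forall>h\<in>set l. P h \<or> smooth_on S h) \<and>
             (\<forall>x\<in>S. frechet_derivative g (at x) v = (\<Sum>h\<leftarrow>l. h x)))"
  shows "smooth_on S f"
proof -
  define Q where "Q k \<longleftrightarrow> (\<exists>l. (\<forall>h\<in>set l. P h \<or> smooth_on S h) \<and> (\<forall>x\<in>S. k x = (\<Sum>h\<leftarrow>l. h x)))"
    for k
  have "Q f" unfolding Q_def using \<open>P f\<close> by (intro exI[of _ "[f]"]) auto
  then show ?thesis
  proof (rule smooth_on_coinduct_fixed)
    fix k assume "Q k"
    then obtain l where l: "\<forall>h\<in>set l. P h \<or> smooth_on S h" "\<forall>x\<in>S. k x = (\<Sum>h\<leftarrow>l. h x)"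
      unfolding Q_def by blast
    have "h differentiable (at x)" if "h \<in> set l" "x \<in> S" for h x
      using l(1) that step smooth_on_differentiable_on S differentiable_on_eq_differentiable_at by blast
    then have "((\<lambda>y. \<Sum>h\<leftarrow>l. h y) has_derivative (\<lambda>w. \<Sum>h\<leftarrow>l. frechet_derivative h (at x) w)) (at x)"
      if "x \<in> S" for x
      using that by (intro has_derivative_sum_list) auto
    then have kder: "(k has_derivative (\<lambda>w. \<Sum>h\<leftarrow>l. frechet_derivative h (at x) w)) (at x)"
      if "x \<in> S" for x
      by (rule has_derivative_transform_within_open[OF _ S that]) (use l(2) that in auto)
    have "k differentiable_on S"
      using kder by (meson differentiable_at_imp_differentiable_on differentiable_def)
    moreover have "Q (\<lambda>x. frechet_derivative k (at x) v)" for v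
    proof -
      have "\<forall>h. \<exists>lh. P h \<longrightarrow> (\<forall>h'\<in>set lh. P h' \<or> smooth_on S h') \<and>
             (\<forall>x\<in>S. frechet_derivative h (at x) v = (\<Sum>h'\<leftarrow>lh. h' x))"
        using step by blast
      then obtain LP where LP: "\<And>h. P h \<Longrightarrow> (\<forall>h'\<in>set (LP h). P h' \<or> smooth_on S h') \<and>
             (\<forall>x\<in>S. frechet_derivative h (at x) v = (\<Sum>h'\<leftarrow>LP h. h' x))"
        by metis
      define L where "L h = (if P h then LP h else [\<lambda>x. frechet_derivative h (at x) v])" for h
      show ?thesis unfolding Q_def
      proof (intro exI[of _ "concat (map L l)"] conjI ballI)
        fix h' assume "h' \<in> set (concat (map L l))"
        then obtain h where h: "h \<in> set l" "h' \<in> set (L h)" by auto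
        show "P h' \<or> smooth_on S h'"
          using LP h l(1) by (cases "P h") (auto simp: L_def intro: smooth_on_frechet_derivative)
      next
        fix x assume x: "x \<in> S"
        have "frechet_derivative k (at x) v = (\<Sum>h\<leftarrow>l. frechet_derivative h (at x) v)"
          using frechet_derivative_at[OF kder[OF x]] by metis
        also have "\<dots> = (\<Sum>h\<leftarrow>l. (\<Sum>k\<leftarrow>L h. k x))"
          by (rule arg_cong[where f=sum_list], rule map_cong) (use LP x in \<open>auto simp: L_def\<close>)
        also have "\<dots> = (\<Sum>h\<leftarrow>concat (map L l). h x)"
          by (induction l) auto
        finally show "frechet_derivative k (at x) v = (\<Sum>h\<leftarrow>concat (map L l). h x)" .
      qed
    qed
    ultimately show "k differentiable_on S \<and> (\<forall>v. Q (\<lambda>x. frechet_derivative k (at x) v) \<or>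
          smooth_on S (\<lambda>x. frechet_derivative k (at x) v))" by blast
  qed
qed

lemma smooth_on_const: "smooth_on S (\<lambda>x::'a::real_normed_vector. c::'b::real_normed_vector)"
proof -
  define P where "P h \<longleftrightarrow> (\<exists>c. h = (\<lambda>x. c))" for h :: "'a \<Rightarrow> 'b"
  have "P (\<lambda>x. c)" unfolding P_def by blast
  then show ?thesis
  proof (rule smooth_on_coinduct_fixed)
    fix h assume "P h"
    then obtain c where h: "h = (\<lambda>x. c)" unfolding P_def by blast
    show "h differentiable_on S \<and> (\<forall>v. P (\<lambda>x. frechet_derivative h (at x) v) \<or>
        smooth_on S (\<lambda>x. frechet_derivative h (at x) v))"
      unfolding h P_def by (simp, blast)
  qed
qed

lemma smooth_on_affine:
  fixes a :: "'a::real_inner"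
  shows "smooth_on S (\<lambda>x. inner x a + c)"
proof -
  define P where "P h \<longleftrightarrow> (\<exists>a c. h = (\<lambda>x. inner x a + c))" for h :: "'a \<Rightarrow> real"
  have "P (\<lambda>x. inner x a + c)" unfolding P_def by blast
  then show ?thesis
  proof (rule smooth_on_coinduct_fixed)
    fix h assume "P h"
    then obtain a c where h: "h = (\<lambda>x. inner x a + c)" unfolding P_def by blast
    have d: "(h has_derivative (\<lambda>w. inner w a)) (at x)" for x
      unfolding h by (rule has_derivative_add_const[OF has_derivative_inner_left[OF has_derivative_ident]])
    have "h differentiable_on S"
      using d by (meson differentiable_at_imp_differentiable_on differentiable_def)
    moreover have "P (\<lambda>x. frechet_derivative h (at x) v)" for v
      unfolding P_def frechet_derivative_apply[OF d]
      by (intro exI[of _ 0] exI[of _ "inner v a"]) simp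
    ultimately show "h differentiable_on S \<and> (\<forall>v. P (\<lambda>x. frechet_derivative h (at x) v) \<or>
        smooth_on S (\<lambda>x. frechet_derivative h (at x) v))" by simp
  qed
qed

lemma smooth_on_add:
  fixes f g :: "'a::real_normed_vector \<Rightarrow> 'b::real_normed_vector"
  assumes S: "open S" and "smooth_on S f" "smooth_on S g"
  shows "smooth_on S (\<lambda>x. f x + g x)"
proof -
  define P where "P h \<longleftrightarrow> (\<exists>f g. smooth_on S f \<and> smooth_on S g \<and> (\<forall>x\<in>S. h x = f x + g x))"
    for h :: "'a \<Rightarrow> 'b"
  have "P (\<lambda>x. f x + g x)" using assms unfolding P_def by blast
  then show ?thesis
  proof (rule smooth_on_coinduct_sum_list[OF S])
    fix h assume "P h"
    then obtain f g where fg: "smooth_on S f" "smooth_on S g" "\<forall>x\<in>S. h x = f x + g x"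
      unfolding P_def by blast
    have d: "(h has_derivative (\<lambda>w. frechet_derivative f (at x) w + frechet_derivative g (at x) w)) (at x)"
      if "x \<in> S" for x
      using has_derivative_transform_within_open[OF has_derivative_add[OF
          smooth_on_has_derivative[OF S that fg(1)] smooth_on_has_derivative[OF S that fg(2)]] S that] fg(3)
      by auto
    have "h differentiable_on S"
      using d by (meson differentiable_at_imp_differentiable_on differentiable_def)
    moreover have "\<exists>l. (\<forall>k\<in>set l. P k \<or> smooth_on S k) \<and>
        (\<forall>x\<in>S. frechet_derivative h (at x) v = (\<Sum>k\<leftarrow>l. k x))" for v
    proof (intro exI conjI)
      show "\<forall>x\<in>S. frechet_derivative h (at x) v =
          (\<Sum>k\<leftarrow>[\<lambda>x. frechet_derivative f (at x) v, \<lambda>x. frechet_derivative g (at x) v]. k x)"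
        using frechet_derivative_apply[OF d] by simp
    qed (simp add: smooth_on_frechet_derivative fg)
    ultimately show "h differentiable_on S \<and> (\<forall>v. \<exists>l. (\<forall>h\<in>set l. P h \<or> smooth_on S h) \<and>
             (\<forall>x\<in>S. frechet_derivative h (at x) v = (\<Sum>h\<leftarrow>l. h x)))"
      by blast
  qed
qed

lemma smooth_on_mult:
  fixes f g :: "'a::real_normed_vector \<Rightarrow> real"
  assumes S: "open S" and "smooth_on S f" "smooth_on S g"
  shows "smooth_on S (\<lambda>x. f x * g x)"
proof -
  define P where "P h \<longleftrightarrow> (\<exists>f g. smooth_on S f \<and> smooth_on S g \<and> (\<forall>x\<in>S. h x = f x * g x))"
    for h :: "'a \<Rightarrow> real"
  have "P (\<lambda>x. f x * g x)" using assms unfolding P_def by blast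
  then show ?thesis
  proof (rule smooth_on_coinduct_sum_list[OF S])
    fix h assume "P h"
    then obtain f g where fg: "smooth_on S f" "smooth_on S g" "\<forall>x\<in>S. h x = f x * g x"
      unfolding P_def by blast
    have d: "(h has_derivative
        (\<lambda>w. f x * frechet_derivative g (at x) w + frechet_derivative f (at x) w * g x)) (at x)"
      if "x \<in> S" for x
      using has_derivative_transform_within_open[OF has_derivative_mult[OF
          smooth_on_has_derivative[OF S that fg(1)] smooth_on_has_derivative[OF S that fg(2)]] S that] fg(3)
      by auto
    have "h differentiable_on S"
      using d by (meson differentiable_at_imp_differentiable_on differentiable_def)
    moreover have "\<exists>l. (\<forall>k\<in>set l. P k \<or> smooth_on S k) \<and>
        (\<forall>x\<in>S. frechet_derivative h (at x) v = (\<Sum>k\<leftarrow>l. k x))" for v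
    proof (intro exI conjI)
      show "\<forall>x\<in>S. frechet_derivative h (at x) v = (\<Sum>k\<leftarrow>[\<lambda>x. f x * frechet_derivative g (at x) v,
          \<lambda>x. frechet_derivative f (at x) v * g x]. k x)"
        using frechet_derivative_apply[OF d] by simp
      have "P (\<lambda>x. f x * frechet_derivative g (at x) v)" "P (\<lambda>x. frechet_derivative f (at x) v * g x)"
        unfolding P_def using fg smooth_on_frechet_derivative by blast+
      then show "\<forall>k\<in>set [\<lambda>x. f x * frechet_derivative g (at x) v, \<lambda>x. frechet_derivative f (at x) v * g x].
          P k \<or> smooth_on S k"
        by simp
    qed
    ultimately show "h differentiable_on S \<and> (\<forall>v. \<exists>l. (\<forall>h\<in>set l. P h \<or> smooth_on S h) \<and>
             (\<forall>x\<in>S. frechet_derivative h (at x) v = (\<Sum>h\<leftarrow>l. h x)))"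
      by blast
  qed
qed

lemma smooth_on_compose:
  fixes a :: "real \<Rightarrow> real" and u :: "'a::real_normed_vector \<Rightarrow> real"
  assumes S: "open S" and T: "open T" and a: "smooth_on T a" and u: "smooth_on S u"
    and uST: "\<And>x. x \<in> S \<Longrightarrow> u x \<in> T"
  shows "smooth_on S (\<lambda>x. a (u x))"
proof -
  define P where "P h \<longleftrightarrow> (\<exists>a b. smooth_on T a \<and> smooth_on S b \<and> (\<forall>x\<in>S. h x = a (u x) * b x))"
    for h :: "'a \<Rightarrow> real"
  have "P (\<lambda>x. a (u x))"
    using a smooth_on_const[of S "1::real"] unfolding P_def by (intro exI[of _ a] exI[of _ "\<lambda>x. 1"]) simp
  then show ?thesis
  proof (rule smooth_on_coinduct_sum_list[OF S])
    fix h assume "P h"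
    then obtain a b where ab: "smooth_on T a" "smooth_on S b" "\<forall>x\<in>S. h x = a (u x) * b x"
      unfolding P_def by blast
    define a' where "a' t = frechet_derivative a (at t) 1" for t
    have au: "((\<lambda>x. a (u x)) has_derivative (\<lambda>w. a' (u x) * frechet_derivative u (at x) w)) (at x)"
      if "x \<in> S" for x
    proof -
      have Da: "(a has_derivative frechet_derivative a (at (u x))) (at (u x))"
        using smooth_on_has_derivative[OF T uST[OF that] ab(1)] .
      have "frechet_derivative a (at (u x)) w = a' (u x) * w" for w
        unfolding a'_def by (rule has_derivative_real_apply[OF Da])
      then show ?thesis
        using diff_chain_at[OF smooth_on_has_derivative[OF S that u] Da] by (simp add: o_def)
    qed
    have d: "(h has_derivative
        (\<lambda>w. a (u x) * frechet_derivative b (at x) w + a' (u x) * (frechet_derivative u (at x) w * b x))) (at x)"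
      if "x \<in> S" for x
      using has_derivative_transform_within_open[OF has_derivative_mult[OF au[OF that]
          smooth_on_has_derivative[OF S that ab(2)]] S that] ab(3)
      by (simp add: mult.assoc)
    have "h differentiable_on S"
      using d by (meson differentiable_at_imp_differentiable_on differentiable_def)
    moreover have "\<exists>l. (\<forall>k\<in>set l. P k \<or> smooth_on S k) \<and>
        (\<forall>x\<in>S. frechet_derivative h (at x) v = (\<Sum>k\<leftarrow>l. k x))" for v
    proof (intro exI conjI)
      show "\<forall>x\<in>S. frechet_derivative h (at x) v = (\<Sum>k\<leftarrow>[\<lambda>x. a (u x) * frechet_derivative b (at x) v,
          \<lambda>x. a' (u x) * (frechet_derivative u (at x) v * b x)]. k x)"
        using frechet_derivative_apply[OF d] by simp
      have "P (\<lambda>x. a (u x) * frechet_derivative b (at x) v)"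
        unfolding P_def using ab smooth_on_frechet_derivative[OF ab(2)] by blast
      moreover have "P (\<lambda>x. a' (u x) * (frechet_derivative u (at x) v * b x))"
        unfolding P_def a'_def
        using smooth_on_frechet_derivative[OF ab(1)]
          smooth_on_mult[OF S smooth_on_frechet_derivative[OF u] ab(2)] by blast
      ultimately show "\<forall>k\<in>set [\<lambda>x. a (u x) * frechet_derivative b (at x) v,
          \<lambda>x. a' (u x) * (frechet_derivative u (at x) v * b x)]. P k \<or> smooth_on S k"
        by simp
    qed
    ultimately show "h differentiable_on S \<and> (\<forall>v. \<exists>l. (\<forall>h\<in>set l. P h \<or> smooth_on S h) \<and>
             (\<forall>x\<in>S. frechet_derivative h (at x) v = (\<Sum>h\<leftarrow>l. h x)))"
      by blast
  qed
qed

lemma smooth_on_derivative_sequence: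
  fixes d :: "nat \<Rightarrow> real \<Rightarrow> real"
  assumes S: "open S" and der: "\<And>n x. x \<in> S \<Longrightarrow> (d n has_real_derivative d (Suc n) x) (at x)"
  shows "smooth_on S (d 0)"
proof -
  define P where "P h \<longleftrightarrow> (\<exists>n c. \<forall>x\<in>S. h x = c * d n x)" for h
  have "P (d 0)" unfolding P_def by (intro exI[of _ 0] exI[of _ 1]) auto
  then show ?thesis
  proof (rule smooth_on_coinduct_sum_list[OF S])
    fix h assume "P h"
    then obtain n c where h: "\<forall>x\<in>S. h x = c * d n x" unfolding P_def by blast
    have dd: "(h has_derivative (\<lambda>w. (w * c) * d (Suc n) x)) (at x)" if "x \<in> S" for x
    proof -
      have "((\<lambda>x. c * d n x) has_real_derivative c * d (Suc n) x) (at x)"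
        using der[OF that] by (auto intro!: derivative_eq_intros)
      then have "((\<lambda>x. c * d n x) has_derivative (\<lambda>w. (w * c) * d (Suc n) x)) (at x)"
        unfolding has_field_derivative_def by (rule has_derivative_eq_rhs) (simp_all add: fun_eq_iff)
      from has_derivative_transform_within_open[OF this S that] h show ?thesis by simp
    qed
    have "h differentiable_on S"
      using dd by (meson differentiable_at_imp_differentiable_on differentiable_def)
    moreover have "\<exists>l. (\<forall>k\<in>set l. P k \<or> smooth_on S k) \<and>
        (\<forall>x\<in>S. frechet_derivative h (at x) v = (\<Sum>k\<leftarrow>l. k x))" for v
    proof (intro exI conjI)
      show "\<forall>x\<in>S. frechet_derivative h (at x) v = (\<Sum>k\<leftarrow>[\<lambda>x. (v * c) * d (Suc n) x]. k x)"
        using frechet_derivative_apply[OF dd] by simp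
      show "\<forall>k\<in>set [\<lambda>x. (v * c) * d (Suc n) x]. P k \<or> smooth_on S k"
        unfolding P_def by auto
    qed
    ultimately show "h differentiable_on S \<and> (\<forall>v. \<exists>l. (\<forall>h\<in>set l. P h \<or> smooth_on S h) \<and>
             (\<forall>x\<in>S. frechet_derivative h (at x) v = (\<Sum>h\<leftarrow>l. h x)))"
      by blast
  qed
qed

lemma smooth_on_sum:
  fixes f :: "'i \<Rightarrow> 'a::real_normed_vector \<Rightarrow> 'b::real_normed_vector"
  assumes S: "open S" and "finite I" and "\<And>i. i \<in> I \<Longrightarrow> smooth_on S (f i)"
  shows "smooth_on S (\<lambda>x. \<Sum>i\<in>I. f i x)"
  using assms(2,3)
  by (induction I rule: finite_induct) (simp_all add: smooth_on_const smooth_on_add[OF S])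

lemma smooth_on_prod:
  fixes f :: "'i \<Rightarrow> 'a::real_normed_vector \<Rightarrow> real"
  assumes S: "open S" and "finite I" and "\<And>i. i \<in> I \<Longrightarrow> smooth_on S (f i)"
  shows "smooth_on S (\<lambda>x. \<Prod>i\<in>I. f i x)"
  using assms(2,3)
  by (induction I rule: finite_induct) (simp_all add: smooth_on_const smooth_on_mult[OF S])

lemma smooth_on_power:
  fixes f :: "'a::real_normed_vector \<Rightarrow> real"
  assumes S: "open S" and f: "smooth_on S f"
  shows "smooth_on S (\<lambda>x. f x ^ n)"
  by (induction n) (simp_all add: smooth_on_const smooth_on_mult[OF S f])

lemma smooth_on_diff:
  fixes f g :: "'a::real_normed_vector \<Rightarrow> real"
  assumes S: "open S" and "smooth_on S f" "smooth_on S g"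
  shows "smooth_on S (\<lambda>x. f x - g x)"
  using smooth_on_add[OF S assms(2) smooth_on_mult[OF S smooth_on_const assms(3), of "-1"]] by simp

section \<open>Smooth bump functions\<close>

lemma poly_times_exp_minus_tendsto_0: "((\<lambda>s. poly q s * exp (- s)) \<longlongrightarrow> (0::real)) at_top"
proof -
  have eq: "poly q s * exp (- s) = (\<Sum>i\<le>degree q. coeff q i * (s ^ i / exp s))" for s
    by (simp add: poly_altdef sum_distrib_right exp_minus divide_inverse mult.assoc)
  have "((\<lambda>s. \<Sum>i\<le>degree q. coeff q i * (s ^ i / exp s)) \<longlongrightarrow> (\<Sum>i\<le>degree q. coeff q i * 0)) at_top"
    by (intro tendsto_sum tendsto_mult tendsto_const tendsto_power_div_exp_0)
  then show ?thesis unfolding eq by simp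
qed

text \<open>The \<open>n\<close>-th derivative of \<open>t \<mapsto> exp (-1/t)\<close> on \<open>t > 0\<close> is \<open>p\<^sub>n(1/t) exp (-1/t)\<close>; differentiating
  gives the recursion \<open>p\<^sub>n\<^sub>+\<^sub>1(s) = s\<^sup>2 (p\<^sub>n(s) - p\<^sub>n'(s))\<close>.\<close>
primrec flat_poly :: "nat \<Rightarrow> real poly" where
  "flat_poly 0 = 1"
| "flat_poly (Suc n) = [:0, 0, 1:] * (flat_poly n - pderiv (flat_poly n))"

definition flat_deriv :: "nat \<Rightarrow> real \<Rightarrow> real" where
  "flat_deriv n t = (if 0 < t then poly (flat_poly n) (inverse t) * exp (- inverse t) else 0)"

lemma flat_deriv_pos_has_derivative:
  assumes "0 < t"
  shows "((\<lambda>t. poly (flat_poly n) (inverse t) * exp (- inverse t)) has_real_derivative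
           poly (flat_poly (Suc n)) (inverse t) * exp (- inverse t)) (at t)"
proof -
  have "((\<lambda>t. poly (flat_poly n) (inverse t) * exp (- inverse t)) has_real_derivative
     poly (pderiv (flat_poly n)) (inverse t) * (- (inverse t ^ 2)) * exp (- inverse t) +
     poly (flat_poly n) (inverse t) * (exp (- inverse t) * (- (- (inverse t ^ 2))))) (at t)"
    using assms by (auto intro!: derivative_eq_intros DERIV_chain2[OF poly_DERIV] simp: power2_eq_square)
  then show ?thesis
    by (simp add: algebra_simps power2_eq_square)
qed

lemma flat_deriv_has_derivative: "(flat_deriv n has_real_derivative flat_deriv (Suc n) t) (at t)"
proof (cases "t = 0")
  case False
  show ?thesis
  proof (cases "0 < t")
    case True
    have "((\<lambda>t. poly (flat_poly n) (inverse t) * exp (- inverse t)) has_real_derivative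
        flat_deriv (Suc n) t) (at t)"
      using flat_deriv_pos_has_derivative[OF True, of n] True by (simp add: flat_deriv_def)
    then show ?thesis
      by (rule has_field_derivative_transform_within_open[where S="{0<..}"])
        (use True in \<open>auto simp: flat_deriv_def\<close>)
  next
    case False
    with \<open>t \<noteq> 0\<close> have "t < 0" by simp
    have "((\<lambda>t. 0) has_real_derivative flat_deriv (Suc n) t) (at t)"
      using \<open>t < 0\<close> by (simp add: flat_deriv_def)
    then show ?thesis
      by (rule has_field_derivative_transform_within_open[where S="{..<0}"])
        (use \<open>t < 0\<close> in \<open>auto simp: flat_deriv_def\<close>)
  qed
next
  case True
  have lim_right: "((\<lambda>h. flat_deriv n h / h) \<longlongrightarrow> 0) (at_right 0)"
  proof -
    have "((\<lambda>h. poly ([:0, 1:] * flat_poly n) (inverse h) * exp (- inverse h)) \<longlongrightarrow> 0) (at_right 0)"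
      by (rule filterlim_compose[OF poly_times_exp_minus_tendsto_0 filterlim_inverse_at_top_right])
    moreover have "eventually (\<lambda>h. poly ([:0, 1:] * flat_poly n) (inverse h) * exp (- inverse h) =
        flat_deriv n h / h) (at_right (0::real))"
      by (rule eventually_at_right_less[THEN eventually_mono]) (auto simp: flat_deriv_def divide_inverse)
    ultimately show ?thesis by (rule Lim_transform_eventually)
  qed
  have lim_left: "((\<lambda>h. flat_deriv n h / h) \<longlongrightarrow> 0) (at_left 0)"
  proof -
    have "eventually (\<lambda>h. 0 = flat_deriv n h / h) (at_left (0::real))"
      unfolding eventually_at_filter by (rule always_eventually) (auto simp: flat_deriv_def)
    then show ?thesis by (rule Lim_transform_eventually[OF tendsto_const])
  qed
  have "((\<lambda>h. (flat_deriv n (0 + h) - flat_deriv n 0) / h) \<longlongrightarrow> 0) (at 0)"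
    using filterlim_split_at[OF lim_left lim_right] by (simp add: flat_deriv_def)
  then show ?thesis using True by (simp add: DERIV_def flat_deriv_def)
qed

definition flat :: "real \<Rightarrow> real" where
  "flat t = (if 0 < t then exp (- inverse t) else 0)"

lemma smooth_on_flat: "smooth_on UNIV flat"
proof -
  have "flat = flat_deriv 0" by (simp add: fun_eq_iff flat_def flat_deriv_def)
  moreover have "smooth_on UNIV (flat_deriv 0)"
    by (rule smooth_on_derivative_sequence) (auto intro: flat_deriv_has_derivative)
  ultimately show ?thesis by simp
qed

lemma flat_nonneg: "0 \<le> flat t" and flat_pos: "0 < t \<Longrightarrow> 0 < flat t" and flat_zero: "t \<le> 0 \<Longrightarrow> flat t = 0"
  by (simp_all add: flat_def)

lemma smooth_on_inverse: "smooth_on {0<..} (\<lambda>x::real. inverse x)"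
proof -
  define d :: "nat \<Rightarrow> real \<Rightarrow> real" where "d = (\<lambda>n x. (-1) ^ n * fact n * inverse x ^ Suc n)"
  have "(d n has_real_derivative d (Suc n) x) (at x)" if "x \<in> {0<..}" for n x
  proof -
    have "((\<lambda>x. (-1) ^ n * fact n * inverse x ^ Suc n) has_real_derivative
        (-1) ^ n * fact n * ((1 + real n) * (- (inverse x ^ Suc (Suc 0)) * inverse x ^ n))) (at x)"
      using that by (intro DERIV_cmult DERIV_power_Suc DERIV_inverse) auto
    then show ?thesis
      unfolding d_def by (simp add: algebra_simps)
  qed
  then have "smooth_on {0<..} (d 0)" by (intro smooth_on_derivative_sequence) auto
  then show ?thesis by (simp add: d_def fun_eq_iff)
qed

definition smooth_step :: "real \<Rightarrow> real" where
  "smooth_step t = flat t * inverse (flat t + flat (1 - t))"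

lemma flat_step_denominator_pos: "0 < flat t + flat (1 - t)"
  using flat_pos[of t] flat_pos[of "1 - t"] flat_nonneg[of t] flat_nonneg[of "1 - t"]
  by (cases "0 < t") auto

lemma smooth_on_smooth_step: "smooth_on UNIV smooth_step"
proof -
  have "smooth_on UNIV (\<lambda>t::real. flat (inner t (-1) + 1))"
    by (rule smooth_on_compose[OF open_UNIV open_UNIV smooth_on_flat smooth_on_affine]) auto
  then have denom: "smooth_on UNIV (\<lambda>t. flat t + flat (1 - t))"
    by (intro smooth_on_add[OF open_UNIV smooth_on_flat]) simp
  have "smooth_on UNIV (\<lambda>t. inverse (flat t + flat (1 - t)))"
    by (rule smooth_on_compose[OF open_UNIV _ smooth_on_inverse denom])
      (auto intro: flat_step_denominator_pos)
  from smooth_on_mult[OF open_UNIV smooth_on_flat this] show ?thesis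
    unfolding smooth_step_def[abs_def] .
qed

lemma smooth_step_zero: "t \<le> 0 \<Longrightarrow> smooth_step t = 0"
  by (simp add: smooth_step_def flat_zero)

lemma smooth_step_one: "1 \<le> t \<Longrightarrow> smooth_step t = 1"
  using flat_pos[of t] by (simp add: smooth_step_def flat_zero)

lemma smooth_step_bounds: "0 \<le> smooth_step t \<and> smooth_step t \<le> 1"
  using flat_step_denominator_pos[of t] flat_nonneg[of t] flat_nonneg[of "1 - t"]
  by (simp add: smooth_step_def divide_inverse[symmetric] divide_le_eq_1)

text \<open>The constants make it 1 on \<open>cball c r\<close> and 0 outside \<open>ball c (2 * r)\<close>.\<close>
definition smooth_bump :: "'y::euclidean_space \<Rightarrow> real \<Rightarrow> 'y \<Rightarrow> real" where
  "smooth_bump c r y = smooth_step (4 / 3 - (norm (y - c))\<^sup>2 / (3 * r\<^sup>2))"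

lemma smooth_on_smooth_bump: "smooth_on UNIV (smooth_bump c r)"
proof -
  have "(norm (y - c))\<^sup>2 = (\<Sum>b\<in>Basis. (inner y b + - inner c b) * (inner y b + - inner c b))" for y
  proof -
    have "(norm (y - c))\<^sup>2 = (\<Sum>b\<in>Basis. ((y - c) \<bullet> b) * ((y - c) \<bullet> b))"
      by (simp only: power2_norm_eq_inner euclidean_inner[of "y - c" "y - c"])
    then show ?thesis by (simp add: inner_diff_left)
  qed
  moreover have "smooth_on UNIV (\<lambda>y. \<Sum>b\<in>Basis. (inner y b + - inner c b) * (inner y b + - inner c b))"
    by (intro smooth_on_sum smooth_on_mult smooth_on_affine) auto
  ultimately have "smooth_on UNIV (\<lambda>y. (norm (y - c))\<^sup>2)" by simp
  then have "smooth_on UNIV (\<lambda>y. 4 / 3 - (norm (y - c))\<^sup>2 / (3 * r\<^sup>2))"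
    unfolding divide_inverse by (intro smooth_on_diff smooth_on_mult smooth_on_const) auto
  then show ?thesis unfolding smooth_bump_def[abs_def]
    by (intro smooth_on_compose[OF open_UNIV open_UNIV smooth_on_smooth_step]) auto
qed

lemma smooth_bump_one:
  assumes "0 < r" "norm (y - c) \<le> r" shows "smooth_bump c r y = 1"
proof -
  have "(norm (y - c))\<^sup>2 \<le> r\<^sup>2" using assms by (simp add: power_mono)
  then have "1 \<le> 4 / 3 - (norm (y - c))\<^sup>2 / (3 * r\<^sup>2)"
    using assms(1) by (simp add: field_simps)
  then show ?thesis unfolding smooth_bump_def by (rule smooth_step_one)
qed

lemma smooth_bump_zero:
  assumes "0 < r" "2 * r \<le> norm (y - c)" shows "smooth_bump c r y = 0"
proof -
  have "(2 * r)\<^sup>2 \<le> (norm (y - c))\<^sup>2" using assms by (intro power_mono) auto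
  then have "4 / 3 - (norm (y - c))\<^sup>2 / (3 * r\<^sup>2) \<le> 0"
    using assms(1) by (simp add: field_simps power2_eq_square)
  then show ?thesis unfolding smooth_bump_def by (rule smooth_step_zero)
qed

lemma smooth_bump_bounds: "0 \<le> smooth_bump c r y \<and> smooth_bump c r y \<le> 1"
  unfolding smooth_bump_def by (rule smooth_step_bounds)

lemma smooth_urysohn_compact_closed:
  fixes K D :: "'y::euclidean_space set"
  assumes K: "compact K" and D: "closed D" and KD: "K \<inter> D = {}"
  obtains \<gamma> :: "'y \<Rightarrow> real" and C where "smooth_on UNIV \<gamma>" "\<And>y. 0 \<le> \<gamma> y \<and> \<gamma> y \<le> 1"
    "K \<subseteq> interior {y. \<gamma> y = 1}" "D \<subseteq> interior {y. \<gamma> y = 0}"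
    "compact C" "\<And>y. y \<notin> C \<Longrightarrow> \<gamma> y = 0"
proof -
  obtain \<delta> where \<delta>: "\<delta> > 0" "\<forall>x\<in>K. \<forall>y\<in>D. \<delta> \<le> dist x y"
    using separate_compact_closed[OF K D KD] by blast
  define r where "r = \<delta> / 3"
  have r: "0 < r" using \<delta> by (simp add: r_def)
  obtain Cs where Cs: "Cs \<subseteq> K" "finite Cs" "K \<subseteq> (\<Union>c\<in>Cs. ball c r)"
    using compactE_image[OF K, of K "\<lambda>c. ball c r"] r by force
  define \<gamma> where "\<gamma> y = 1 - (\<Prod>c\<in>Cs. 1 - smooth_bump c r y)" for y
  define C where "C = (\<Union>c\<in>Cs. cball c (2 * r))"
  have "smooth_on UNIV \<gamma>"
    unfolding \<gamma>_def[abs_def]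
    by (intro smooth_on_diff smooth_on_const smooth_on_prod smooth_on_smooth_bump Cs(2)) auto
  moreover have "0 \<le> \<gamma> y \<and> \<gamma> y \<le> 1" for y
    unfolding \<gamma>_def by (simp, intro conjI prod_nonneg prod_le_1) (simp_all add: smooth_bump_bounds)
  moreover have "K \<subseteq> interior {y. \<gamma> y = 1}"
  proof -
    have "\<gamma> y = 1" if y: "y \<in> (\<Union>c\<in>Cs. ball c r)" for y
    proof -
      obtain c where c: "c \<in> Cs" "y \<in> ball c r" using y by blast
      have "smooth_bump c r y = 1"
        using c r by (intro smooth_bump_one) (auto simp: dist_norm norm_minus_commute)
      then show ?thesis using c Cs(2) by (auto simp: \<gamma>_def prod_zero_iff)
    qed
    then have "(\<Union>c\<in>Cs. ball c r) \<subseteq> {y. \<gamma> y = 1}" by blast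
    then have "(\<Union>c\<in>Cs. ball c r) \<subseteq> interior {y. \<gamma> y = 1}"
      by (rule interior_maximal) auto
    then show ?thesis using Cs(3) by blast
  qed
  moreover have C: "compact C" unfolding C_def using Cs(2) by (intro compact_UN) auto
  moreover have \<gamma>C: "\<gamma> y = 0" if "y \<notin> C" for y
  proof -
    have "smooth_bump c r y = 0" if "c \<in> Cs" for c
      using \<open>y \<notin> C\<close> that r by (intro smooth_bump_zero) (auto simp: C_def dist_norm norm_minus_commute)
    then show ?thesis by (simp add: \<gamma>_def)
  qed
  moreover have "D \<subseteq> interior {y. \<gamma> y = 0}"
  proof -
    have "D \<subseteq> - C"
      using \<delta>(2) Cs(1) r unfolding C_def r_def by (force simp: dist_commute)
    moreover have "- C \<subseteq> interior {y. \<gamma> y = 0}"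
      using C \<gamma>C by (intro interior_maximal) (auto intro: compact_imp_closed)
    ultimately show ?thesis by blast
  qed
  ultimately show ?thesis using that by blast
qed

section \<open>Completions and restrictions of measures\<close>

lemma borel_measurable_completion_AE_cong:
  fixes f g :: "'a \<Rightarrow> 'b::topological_space"
  assumes f: "f \<in> borel_measurable (completion M)" and ae: "AE x in completion M. f x = g x"
  shows "g \<in> borel_measurable (completion M)"
proof (rule measurableI)
  fix A :: "'b set" assume A: "A \<in> sets borel"
  have fA: "f -` A \<inter> space (completion M) \<in> sets (completion M)" using f A by (rule measurable_sets)
  show "g -` A \<inter> space (completion M) \<in> sets (completion M)"
  proof (rule completion.in_sets_AE[OF _ fA])
    show "AE x in completion M. (x \<in> f -` A \<inter> space (completion M)) = (x \<in> g -` A \<inter> space (completion M))"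
      using ae by eventually_elim auto
  qed auto
qed auto

lemma integral_completion_cong_AE:
  fixes f g :: "'a \<Rightarrow> 'b::{banach, second_countable_topology}"
  assumes ae: "AE x in completion M. f x = g x"
  shows "integral\<^sup>L (completion M) f = integral\<^sup>L (completion M) g"
proof (cases "f \<in> borel_measurable (completion M)")
  case True
  then have "g \<in> borel_measurable (completion M)" using borel_measurable_completion_AE_cong ae by blast
  then show ?thesis using True ae by (intro integral_cong_AE) auto
next
  case False
  have "AE x in completion M. g x = f x" using ae by eventually_elim simp
  then have "g \<notin> borel_measurable (completion M)"
    using borel_measurable_completion_AE_cong False by blast
  then have "\<not> integrable (completion M) g" "\<not> integrable (completion M) f"
    using False by (auto dest: borel_measurable_integrable)
  then show ?thesis by (simp add: not_integrable_integral_eq)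
qed

lemma borel_measurable_sets_borel:
  "sets M = sets borel \<Longrightarrow> f \<in> borel_measurable borel \<Longrightarrow> f \<in> borel_measurable M"
  using measurable_cong_sets[of M borel] by blast

lemma null_sets_mono_measure:
  "sets N = sets M \<Longrightarrow> N \<le> M \<Longrightarrow> A \<in> null_sets M \<Longrightarrow> A \<in> null_sets N"
  using le_measureD3[of N M A] by (auto simp: null_sets_def)

lemma AE_mono_measure:
  assumes "sets N = sets M" "N \<le> M" "AE x in M. P x"
  shows "AE x in N. P x"
proof -
  obtain Z where Z: "Z \<in> null_sets M" "{x\<in>space M. \<not> P x} \<subseteq> Z"
    using assms(3) by (auto elim!: AE_E)
  show ?thesis
    by (rule AE_I'[OF null_sets_mono_measure[OF assms(1,2) Z(1)]])
      (use Z(2) sets_eq_imp_space_eq[OF assms(1)] in simp)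
qed

lemma sets_completion_mono_measure:
  assumes "sets N = sets M" "N \<le> M" "A \<in> sets (completion M)"
  shows "A \<in> sets (completion N)"
proof -
  obtain S B B' where "A = S \<union> B" "B \<subseteq> B'" "B' \<in> null_sets M" "S \<in> sets M"
    using assms(3) by (rule sets_completionE)
  then show ?thesis
    using null_sets_mono_measure[OF assms(1,2)] assms(1) by (auto intro: sets_completionI)
qed

lemma emeasure_completion_mono_measure:
  assumes eq: "sets N = sets M" and le: "N \<le> M" and A: "A \<in> sets (completion M)"
  shows "emeasure (completion N) A \<le> emeasure (completion M) A"
proof -
  obtain S B B' where SB: "A = S \<union> B" "B \<subseteq> B'" "B' \<in> null_sets M" "S \<in> sets M"
    using A by (rule sets_completionE)
  have B'N: "B' \<in> null_sets N" using null_sets_mono_measure[OF eq le SB(3)] .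
  have SN: "S \<in> sets N" using SB(4) eq by simp
  have "emeasure (completion N) A \<le> emeasure (completion N) (S \<union> B')"
    using SB B'N SN by (intro emeasure_mono) auto
  also have "\<dots> = emeasure N (S \<union> B')" using SN B'N by auto
  also have "\<dots> = emeasure N S" using SN B'N by (rule emeasure_Un_null_set)
  also have "\<dots> \<le> emeasure M S" using le_measureD3[OF le eq] .
  also have "\<dots> = emeasure (completion M) S" using SB(4) by simp
  also have "\<dots> \<le> emeasure (completion M) A" using SB A by (intro emeasure_mono) auto
  finally show ?thesis .
qed

lemma null_sets_completion_mono_measure:
  assumes "sets N = sets M" "N \<le> M" "A \<in> null_sets (completion M)"
  shows "A \<in> null_sets (completion N)"
proof -
  have "A \<in> sets (completion M)" using assms(3) by auto
  then have "A \<in> sets (completion N)" "emeasure (completion N) A \<le> emeasure (completion M) A"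
    using sets_completion_mono_measure[OF assms(1,2)] emeasure_completion_mono_measure[OF assms(1,2)]
    by auto
  then show ?thesis using assms(3) by (auto simp: null_sets_def)
qed

lemma measurable_completion_mono_measure:
  assumes "sets N = sets M" "N \<le> M" "f \<in> completion M \<rightarrow>\<^sub>M K"
  shows "f \<in> completion N \<rightarrow>\<^sub>M K"
proof (rule measurableI)
  have sp: "space N = space M" using assms(1) by (rule sets_eq_imp_space_eq)
  show "x \<in> space (completion N) \<Longrightarrow> f x \<in> space K" for x
    using measurable_space[OF assms(3), of x] sp by simp
  show "f -` A \<inter> space (completion N) \<in> sets (completion N)" if "A \<in> sets K" for A
    using sets_completion_mono_measure[OF assms(1,2) measurable_sets[OF assms(3) that]] sp by simp
qed

definition restrict_completion :: "'b::topological_space measure \<Rightarrow> 'b set \<Rightarrow> 'b measure" where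
  "restrict_completion M S = measure_of UNIV (sets borel) (\<lambda>A. emeasure (completion M) (A \<inter> S))"

lemma measurable_ident_density_completion:
  fixes M :: "'b::topological_space measure"
  assumes sM: "sets M = sets borel"
  shows "(\<lambda>x. x) \<in> density (completion M) h \<rightarrow>\<^sub>M borel"
proof (rule measurableI)
  show "(\<lambda>x. x) -` A \<inter> space (density (completion M) h) \<in> sets (density (completion M) h)"
    if "A \<in> sets borel" for A
    using that sM sets_eq_imp_space_eq[OF sM] by simp
qed simp

lemma emeasure_distr_density_indicator_completion:
  fixes M :: "'b::topological_space measure"
  assumes sM: "sets M = sets borel" and S: "S \<in> sets (completion M)" and A: "A \<in> sets borel"
  shows "emeasure (distr (density (completion M) (\<lambda>x. ennreal (indicator S x))) borel (\<lambda>x. x)) A = emeasure (completion M) (A \<inter> S)"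
proof -
  have spM: "space M = UNIV" using sets_eq_imp_space_eq[OF sM] by simp
  have Ac: "A \<in> sets (completion M)" using A sM by simp
  have "emeasure (distr (density (completion M) (\<lambda>x. ennreal (indicator S x))) borel (\<lambda>x. x)) A =
      (\<integral>\<^sup>+ x. ennreal (indicator S x) * indicator A x \<partial>completion M)"
    using A Ac S measurable_ident_density_completion[OF sM] by (simp add: emeasure_distr emeasure_density spM)
  also have "\<dots> = (\<integral>\<^sup>+ x. indicator (A \<inter> S) x \<partial>completion M)"
    by (intro nn_integral_cong) (simp add: ennreal_indicator indicator_inter_arith mult.commute)
  also have "\<dots> = emeasure (completion M) (A \<inter> S)"
    using Ac S by (intro nn_integral_indicator) auto
  finally show ?thesis .
qed

lemma restrict_completion_eq_distr_density:
  fixes M :: "'b::topological_space measure"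
  assumes "sets M = sets borel" "S \<in> sets (completion M)"
  shows "restrict_completion M S = distr (density (completion M) (\<lambda>x. ennreal (indicator S x))) borel (\<lambda>x. x)"
    (is "_ = ?R")
proof -
  have "restrict_completion M S = measure_of UNIV (sets borel) (emeasure ?R)"
    unfolding restrict_completion_def using emeasure_distr_density_indicator_completion[OF assms]
    by (intro measure_of_eq) (auto simp: sets.sigma_sets_eq[of borel, simplified])
  also have "\<dots> = ?R"
    using measure_of_of_measure[of ?R] by simp
  finally show ?thesis .
qed

lemma sets_restrict_completion [simp]: "sets (restrict_completion M S) = sets borel"
  unfolding restrict_completion_def by (simp add: sets.sigma_sets_eq[of borel, simplified])

lemma emeasure_restrict_completion:
  fixes M :: "'b::topological_space measure"
  assumes "sets M = sets borel" "S \<in> sets (completion M)" "A \<in> sets borel"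
  shows "emeasure (restrict_completion M S) A = emeasure (completion M) (A \<inter> S)"
  using assms by (simp add: restrict_completion_eq_distr_density emeasure_distr_density_indicator_completion)

lemma restrict_completion_le:
  fixes M :: "'b::topological_space measure"
  assumes sM: "sets M = sets borel" and S: "S \<in> sets (completion M)"
  shows "restrict_completion M S \<le> M"
proof -
  have "emeasure (restrict_completion M S) A \<le> emeasure M A" for A
  proof (cases "A \<in> sets borel")
    case True
    then have "emeasure (restrict_completion M S) A = emeasure (completion M) (A \<inter> S)"
      by (rule emeasure_restrict_completion[OF sM S])
    also have "\<dots> \<le> emeasure (completion M) A"
      using True S sM by (intro emeasure_mono) auto
    finally show ?thesis using True sM by simp
  qed (simp add: emeasure_notin_sets)
  then show ?thesis
    using sM sets_eq_imp_space_eq[OF sM] by (simp add: le_measure_iff le_fun_def)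
qed

lemma restrict_completion_UNIV:
  fixes M :: "'b::topological_space measure"
  assumes sM: "sets M = sets borel"
  shows "restrict_completion M UNIV = M"
proof (rule measure_eqI)
  show "sets (restrict_completion M UNIV) = sets M" using sM by simp
  have U: "UNIV \<in> sets (completion M)" using sets.top[of M] sets_eq_imp_space_eq[OF sM] by simp
  show "emeasure (restrict_completion M UNIV) A = emeasure M A"
    if "A \<in> sets (restrict_completion M UNIV)" for A
  proof -
    have A: "A \<in> sets borel" using that by simp
    then have "A \<in> sets M" using sM by simp
    then show ?thesis using emeasure_restrict_completion[OF sM U A] by simp
  qed
qed

lemma distr_mono_measure:
  assumes "sets N = sets M" "N \<le> M" "f \<in> M \<rightarrow>\<^sub>M K"
  shows "distr N K f \<le> distr M K f"
proof -
  have fN: "f \<in> N \<rightarrow>\<^sub>M K" using assms(3) measurable_cong_sets[OF assms(1) refl] by blast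
  have "emeasure (distr N K f) A \<le> emeasure (distr M K f) A" for A
  proof (cases "A \<in> sets K")
    case True
    have "emeasure (distr N K f) A = emeasure N (f -` A \<inter> space N)"
      using fN True by (rule emeasure_distr)
    also have "\<dots> \<le> emeasure M (f -` A \<inter> space M)"
      using le_measureD3[OF assms(2,1)] sets_eq_imp_space_eq[OF assms(1)] by simp
    also have "\<dots> = emeasure (distr M K f) A"
      using assms(3) True by (rule emeasure_distr[symmetric])
    finally show ?thesis .
  qed (simp add: emeasure_notin_sets)
  then show ?thesis by (simp add: le_measure_iff le_fun_def)
qed

text \<open>The weight \<open>\<parallel>V \<llcorner> E\<parallel>\<close> is such a push-forward (under \<^const>\<open>fst\<close>) of a restriction, and the functions
  integrated against it are only measurable for the completion of \<open>\<parallel>V\<parallel>\<close>.\<close>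
lemma integral_completion_distr_restrict_completion:
  fixes M :: "'b::topological_space measure" and \<phi> :: "'b \<Rightarrow> 'c::topological_space" and g :: "'c \<Rightarrow> real"
  assumes sM: "sets M = sets borel" and S: "S \<in> sets (completion M)" and \<phi>: "\<phi> \<in> borel_measurable borel"
    and g: "g \<in> borel_measurable (completion (distr M borel \<phi>))"
  shows "integral\<^sup>L (completion (distr (restrict_completion M S) borel \<phi>)) g
        = integral\<^sup>L (completion M) (\<lambda>x. indicator S x * g (\<phi> x))"
proof -
  define D where "D = density (completion M) (\<lambda>x. ennreal (indicator S x))"
  define N where "N = distr (restrict_completion M S) borel \<phi>"
  have \<phi>M: "\<phi> \<in> M \<rightarrow>\<^sub>M borel" using \<phi> measurable_cong_sets[OF sM refl] by blast
  have \<phi>cM: "\<phi> \<in> completion M \<rightarrow>\<^sub>M borel" using \<phi>M by (rule measurable_completion)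
  have \<phi>D: "\<phi> \<in> D \<rightarrow>\<^sub>M borel" using \<phi>cM measurable_cong_sets[of D "completion M"] by (simp add: D_def)
  have N: "N = distr D borel \<phi>"
    unfolding N_def D_def restrict_completion_eq_distr_density[OF sM S]
    by (subst distr_distr) (use \<phi> measurable_ident_density_completion[OF sM] in \<open>simp_all add: o_def\<close>)
  have sN: "sets N = sets (distr M borel \<phi>)" by (simp add: N_def)
  have leN: "N \<le> distr M borel \<phi>"
    unfolding N_def using restrict_completion_le[OF sM S] sM \<phi>M by (intro distr_mono_measure) auto
  obtain g' where g': "g' \<in> borel_measurable (distr M borel \<phi>)" and ae: "AE x in distr M borel \<phi>. g x = g' x"
    using completion_ex_borel_measurable_real[OF g] by blast
  have g'b: "g' \<in> borel_measurable borel" using g' measurable_cong_sets[of "distr M borel \<phi>" borel] by simp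
  have "integral\<^sup>L (completion N) g = integral\<^sup>L (completion N) g'"
    by (rule integral_completion_cong_AE) (rule AE_completion[OF AE_mono_measure[OF sN leN ae]])
  also have "\<dots> = integral\<^sup>L D (\<lambda>x. g' (\<phi> x))"
    using g'b \<phi>D by (simp add: N integral_completion integral_distr)
  also have "\<dots> = integral\<^sup>L (completion M) (\<lambda>x. indicator S x * g' (\<phi> x))"
    unfolding D_def using S measurable_compose[OF \<phi>cM g'b] by (subst integral_density) auto
  also have "\<dots> = integral\<^sup>L (completion M) (\<lambda>x. indicator S x * g (\<phi> x))"
    using AE_completion[OF AE_distrD[OF \<phi>M ae]] by (intro integral_completion_cong_AE) auto
  finally show ?thesis unfolding N_def .
qed

lemma integral_completion_distr:
  fixes M :: "'b::topological_space measure" and \<phi> :: "'b \<Rightarrow> 'c::topological_space" and g :: "'c \<Rightarrow> real"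
  assumes sM: "sets M = sets borel" and \<phi>: "\<phi> \<in> borel_measurable borel"
    and g: "g \<in> borel_measurable (completion (distr M borel \<phi>))"
  shows "integral\<^sup>L (completion (distr M borel \<phi>)) g = integral\<^sup>L (completion M) (\<lambda>x. g (\<phi> x))"
proof -
  have "UNIV \<in> sets (completion M)" using sets.top[of M] sets_eq_imp_space_eq[OF sM] by simp
  from integral_completion_distr_restrict_completion[OF sM this \<phi> g] show ?thesis
    unfolding restrict_completion_UNIV[OF sM] by simp
qed

lemma integral_completion_restrict_completion:
  fixes M :: "'b::topological_space measure" and g :: "'b \<Rightarrow> real"
  assumes sM: "sets M = sets borel" and S: "S \<in> sets (completion M)"
    and g: "g \<in> borel_measurable (completion M)"
  shows "integral\<^sup>L (completion (restrict_completion M S)) g = integral\<^sup>L (completion M) (\<lambda>x. indicator S x * g x)"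
proof -
  have "distr (restrict_completion M S) borel (\<lambda>x. x) = restrict_completion M S"
    by (rule distr_id2) simp
  moreover have "distr M borel (\<lambda>x. x) = M" using sM by (intro distr_id2) simp
  ultimately show ?thesis
    using integral_completion_distr_restrict_completion[OF sM S measurable_ident_sets[OF refl], of g] g by simp
qed

lemma measurable_completion_distr:
  fixes M :: "'b::topological_space measure" and \<phi> :: "'b \<Rightarrow> 'c::topological_space"
  assumes sM: "sets M = sets borel" and \<phi>: "\<phi> \<in> borel_measurable borel"
  shows "\<phi> \<in> completion M \<rightarrow>\<^sub>M completion (distr M borel \<phi>)"
proof (rule completion.measurable_completion2)
  have \<phi>M: "\<phi> \<in> M \<rightarrow>\<^sub>M borel" using \<phi> measurable_cong_sets[OF sM refl] by blast
  have \<phi>M': "\<phi> \<in> M \<rightarrow>\<^sub>M distr M borel \<phi>"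
    using \<phi>M measurable_cong_sets[OF refl, of "distr M borel \<phi>" borel M] by simp
  then show "\<phi> \<in> completion M \<rightarrow>\<^sub>M distr M borel \<phi>" by (rule measurable_completion)
  show "null_sets (distr M borel \<phi>) \<subseteq> null_sets (distr (completion M) (distr M borel \<phi>) \<phi>)"
  proof
    fix A assume A: "A \<in> null_sets (distr M borel \<phi>)"
    then have As: "A \<in> sets (distr M borel \<phi>)" by auto
    have "emeasure (distr (completion M) (distr M borel \<phi>) \<phi>) A = emeasure (distr M (distr M borel \<phi>) \<phi>) A"
      using \<phi>M' by (simp add: distr_completion)
    also have "\<dots> = emeasure (distr M borel \<phi>) A"
      using \<phi>M \<phi>M' As by (simp add: emeasure_distr)
    finally show "A \<in> null_sets (distr (completion M) (distr M borel \<phi>) \<phi>)"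
      using A As by (auto simp: null_sets_def)
  qed
qed

lemma AE_completion_distrD:
  fixes M :: "'b::topological_space measure" and \<phi> :: "'b \<Rightarrow> 'c::topological_space"
  assumes sM: "sets M = sets borel" and \<phi>: "\<phi> \<in> borel_measurable borel"
    and ae: "AE y in completion (distr M borel \<phi>). P y"
  shows "AE x in completion M. P (\<phi> x)"
proof -
  have "\<phi> \<in> M \<rightarrow>\<^sub>M borel" using \<phi> measurable_cong_sets[OF sM refl] by blast
  moreover have "AE y in distr M borel \<phi>. P y" using ae by (simp add: AE_completion_iff)
  ultimately show ?thesis by (rule AE_completion[OF AE_distrD])
qed

lemma completion_ex_borel_measurable_euclidean:
  fixes f :: "'a \<Rightarrow> 'b::euclidean_space"
  assumes f: "f \<in> borel_measurable (completion M)"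
  obtains f' where "f' \<in> borel_measurable M" "AE x in M. f x = f' x"
proof -
  have "\<forall>b\<in>Basis. \<exists>g\<in>borel_measurable M. AE x in M. f x \<bullet> b = g x"
    using completion_ex_borel_measurable_real[OF borel_measurable_inner[OF f borel_measurable_const]] by blast
  then obtain G where G: "\<And>b. b \<in> Basis \<Longrightarrow> G b \<in> borel_measurable M \<and> (AE x in M. f x \<bullet> b = G b x)"
    by metis
  have "(\<lambda>x. \<Sum>b\<in>Basis. G b x *\<^sub>R b) \<in> borel_measurable M"
    using G by (intro borel_measurable_sum borel_measurable_scaleR borel_measurable_const) auto
  moreover have "AE x in M. f x = (\<Sum>b\<in>Basis. G b x *\<^sub>R b)"
  proof -
    have "AE x in M. \<forall>b\<in>Basis. f x \<bullet> b = G b x" using G by (intro AE_finite_allI) auto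
    then show ?thesis
      by eventually_elim (metis (no_types, lifting) euclidean_representation sum.cong)
  qed
  ultimately show ?thesis using that by blast
qed

lemma borel_measurable_blinfun_apply:
  fixes F :: "'a \<Rightarrow> ('b::euclidean_space \<Rightarrow>\<^sub>L 'c::euclidean_space)"
  assumes F: "F \<in> borel_measurable M" and g: "g \<in> borel_measurable M"
  shows "(\<lambda>x. blinfun_apply (F x) (g x)) \<in> borel_measurable M"
proof -
  have "(\<lambda>x. blinfun_apply (F x) b) \<in> borel_measurable M" for b
    using measurable_compose[OF F borel_measurable_continuous_onI[OF
          blinfun.continuous_on[OF continuous_on_id continuous_on_const]]] by simp
  then have "(\<lambda>x. \<Sum>b\<in>Basis. (g x \<bullet> b) *\<^sub>R blinfun_apply (F x) b) \<in> borel_measurable M"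
    using g by (intro borel_measurable_sum borel_measurable_scaleR borel_measurable_inner borel_measurable_const)
  moreover have "blinfun_apply (F x) (g x) = (\<Sum>b\<in>Basis. (g x \<bullet> b) *\<^sub>R blinfun_apply (F x) b)" for x
    by (subst euclidean_representation[symmetric, of "g x"]) (simp only: blinfun.sum_right blinfun.scaleR_right)
  ultimately show ?thesis by simp
qed

lemma Int_vimage_in_sets_completion:
  assumes sM: "sets M = sets borel" and f: "f \<in> borel_measurable (completion M)"
    and C: "C \<in> sets borel" and B: "B \<in> sets borel"
  shows "C \<inter> f -` B \<in> sets (completion M)"
proof -
  have "f -` B \<inter> space (completion M) \<in> sets (completion M)" by (rule measurable_sets[OF f B])
  moreover have "C \<in> sets (completion M)" using C sM by simp
  ultimately show ?thesis using sets_eq_imp_space_eq[OF sM] by (simp add: Int_commute)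
qed

lemma tendsto_integral_power_indicator:
  fixes u h w :: "'a \<Rightarrow> real"
  assumes u: "u \<in> borel_measurable M" and h: "h \<in> borel_measurable M"
    and u01: "\<And>x. 0 \<le> u x \<and> u x \<le> 1" and w: "integrable M w"
    and dom: "AE x in M. \<bar>u x * h x\<bar> \<le> w x"
  shows "(\<lambda>k. \<integral>x. u x ^ Suc k * h x \<partial>M) \<longlonglongrightarrow> (\<integral>x. indicator {x. u x = 1} x * h x \<partial>M)"
proof (rule integral_dominated_convergence[OF _ _ w])
  note [measurable] = u h
  show "(\<lambda>x. indicator {x. u x = 1} x * h x) \<in> borel_measurable M" by measurable
  show "(\<lambda>x. u x ^ Suc k * h x) \<in> borel_measurable M" for k by measurable
  show "AE x in M. norm (u x ^ Suc k * h x) \<le> w x" for k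
    using dom
  proof eventually_elim
    case (elim x)
    have "u x ^ Suc k \<le> u x" using u01[of x] by (simp add: mult_left_le power_le_one)
    then have "\<bar>u x ^ Suc k * h x\<bar> \<le> \<bar>u x * h x\<bar>"
      using u01[of x] by (simp add: abs_mult mult_right_mono)
    then show ?case using elim by simp
  qed
  show "AE x in M. (\<lambda>k. u x ^ Suc k * h x) \<longlonglongrightarrow> indicator {x. u x = 1} x * h x"
  proof (rule AE_I2)
    fix x
    show "(\<lambda>k. u x ^ Suc k * h x) \<longlonglongrightarrow> indicator {x. u x = 1} x * h x"
    proof (cases "u x = 1")
      case False
      then have "(\<lambda>k. u x ^ Suc k) \<longlonglongrightarrow> 0"
        using u01[of x] by (intro LIMSEQ_Suc LIMSEQ_power_zero) auto
      then show ?thesis using False by (auto intro: tendsto_mult_left_zero)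
    qed simp
  qed
qed

section \<open>Test fields and admissible functions\<close>

lemma test_field_smooth: "test_field U \<theta> \<Longrightarrow> smooth_on UNIV \<theta>"
  by (simp add: test_field_def)

lemma test_field_continuous: "test_field U \<theta> \<Longrightarrow> continuous_on UNIV \<theta>"
  using smooth_on_continuous_on test_field_smooth by blast

lemma test_field_eq_0: "x \<notin> support_of \<theta> \<Longrightarrow> \<theta> x = 0"
  unfolding support_of_def using closure_subset[of "{x. \<theta> x \<noteq> 0}"] by auto

lemma test_field_eq_0_outside: "test_field U \<theta> \<Longrightarrow> x \<notin> U \<Longrightarrow> \<theta> x = 0"
  using test_field_eq_0[of x \<theta>] by (auto simp: test_field_def)

lemma test_field_bounded:
  assumes t: "test_field U \<theta>"
  obtains B where "B > 0" "\<And>x. norm (\<theta> x) \<le> B"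
proof -
  have "compact (\<theta> ` support_of \<theta>)"
    using t by (intro compact_continuous_image continuous_on_subset[OF test_field_continuous])
      (auto simp: test_field_def)
  then obtain B where B: "B > 0" "\<And>x. x \<in> support_of \<theta> \<Longrightarrow> norm (\<theta> x) \<le> B"
    using compact_imp_bounded bounded_pos by (metis image_eqI)
  have "norm (\<theta> x) \<le> B" for x
    using B test_field_eq_0[of x \<theta>] by (cases "x \<in> support_of \<theta>") auto
  with B(1) show ?thesis using that by blast
qed

lemma proj_div_eq_0_outside:
  assumes t: "test_field U \<theta>" and x: "x \<notin> U"
  shows "proj_div \<theta> x P = 0"
proof -
  have "x \<in> - support_of \<theta>" using x t by (auto simp: test_field_def)
  then have "frechet_derivative \<theta> (at x) = frechet_derivative (\<lambda>y. 0) (at x)"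
    by (intro frechet_derivative_eq_on_open[of "- support_of \<theta>"] test_field_eq_0)
      (auto simp: support_of_def)
  then show ?thesis by (simp add: proj_div_def)
qed

lemma continuous_on_proj_div:
  fixes \<theta> :: "'a::euclidean_space \<Rightarrow> 'a"
  assumes t: "test_field U \<theta>"
  shows "continuous_on UNIV (\<lambda>z::'a \<times> ('a \<Rightarrow>\<^sub>L 'a). proj_div \<theta> (fst z) (snd z))"
proof -
  have c: "continuous_on UNIV (\<lambda>x. frechet_derivative \<theta> (at x) b)" for b
    using smooth_on_continuous_on[OF smooth_on_frechet_derivative[OF test_field_smooth[OF t]]] .
  have "continuous_on UNIV (\<lambda>z::'a \<times> ('a \<Rightarrow>\<^sub>L 'a). frechet_derivative \<theta> (at (fst z)) b)" for b
    using continuous_on_compose2[OF c[of b] continuous_on_fst[OF continuous_on_id]] by simp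
  then show ?thesis
    unfolding proj_div_def
    by (intro continuous_on_sum continuous_on_inner blinfun.continuous_on continuous_on_snd
        continuous_on_id continuous_on_const)
qed

lemma continuous_on_frechet_derivative_apply:
  fixes g :: "'y::euclidean_space \<Rightarrow> real"
  assumes g: "smooth_on UNIV g"
  shows "continuous_on UNIV (\<lambda>p. frechet_derivative g (at (fst p)) (snd p))"
proof -
  have expand: "frechet_derivative g (at y) w = (\<Sum>b\<in>Basis. (w \<bullet> b) * frechet_derivative g (at y) b)"
    for y w
  proof -
    have lin: "linear (frechet_derivative g (at y))"
      using has_derivative_linear[OF smooth_on_has_derivative[OF open_UNIV _ g]] by simp
    have "frechet_derivative g (at y) w = frechet_derivative g (at y) (\<Sum>b\<in>Basis. (w \<bullet> b) *\<^sub>R b)"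
      by (simp add: euclidean_representation)
    also have "\<dots> = (\<Sum>b\<in>Basis. (w \<bullet> b) *\<^sub>R frechet_derivative g (at y) b)"
      using lin by (simp add: linear_sum linear_scale)
    finally show ?thesis by simp
  qed
  have c: "continuous_on UNIV (\<lambda>y. frechet_derivative g (at y) b)" for b
    using smooth_on_continuous_on[OF smooth_on_frechet_derivative[OF g]] .
  have "continuous_on UNIV (\<lambda>p::'y \<times> 'y. frechet_derivative g (at (fst p)) b)" for b
    using continuous_on_compose2[OF c[of b] continuous_on_fst[OF continuous_on_id]] by simp
  then have "continuous_on UNIV (\<lambda>p::'y \<times> 'y. \<Sum>b\<in>Basis. (snd p \<bullet> b) * frechet_derivative g (at (fst p)) b)"
    by (intro continuous_on_sum continuous_on_mult continuous_on_inner continuous_on_snd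
        continuous_on_id continuous_on_const)
  moreover have "(\<lambda>p. frechet_derivative g (at (fst p)) (snd p)) =
      (\<lambda>p. \<Sum>b\<in>Basis. (snd p \<bullet> b) * frechet_derivative g (at (fst p)) b)"
    using expand by blast
  ultimately show ?thesis by (simp only:)
qed

lemma admissible_gamma_const: "admissible_gamma (\<lambda>y. c)"
  unfolding admissible_gamma_def using smooth_on_const by simp

text \<open>\<open>g \<gamma>\<^sup>k\<^sup>+\<^sup>1\<close> is locally constant outside \<open>C\<close>, so its derivative has compact support even though that
  of \<open>g\<close> need not vanish outside \<open>C\<close>.\<close>
lemma admissible_gamma_mult_power:
  fixes g \<gamma> :: "'y::euclidean_space \<Rightarrow> real"
  assumes g: "admissible_gamma g" and \<gamma>: "smooth_on UNIV \<gamma>" and C: "compact C"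
    and z: "\<And>y. y \<notin> C \<Longrightarrow> \<gamma> y = 0"
  shows "admissible_gamma (\<lambda>y. g y * \<gamma> y ^ Suc k)"
proof -
  have "smooth_on UNIV (\<lambda>y. g y * \<gamma> y ^ Suc k)"
    using g by (intro smooth_on_mult smooth_on_power \<gamma>) (auto simp: admissible_gamma_def)
  moreover have "{y. frechet_derivative (\<lambda>y. g y * \<gamma> y ^ Suc k) (at y) \<noteq> (\<lambda>_. 0)} \<subseteq> C"
  proof (rule subsetI, rule ccontr)
    fix y assume y: "y \<in> {y. frechet_derivative (\<lambda>y. g y * \<gamma> y ^ Suc k) (at y) \<noteq> (\<lambda>_. 0)}" "y \<notin> C"
    have "frechet_derivative (\<lambda>y. g y * \<gamma> y ^ Suc k) (at y) = frechet_derivative (\<lambda>y. 0) (at y)"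
      using y(2) z C by (intro frechet_derivative_eq_on_open[of "- C"]) (auto intro: compact_imp_closed)
    then show False using y(1) by simp
  qed
  then have "compact (closure {y. frechet_derivative (\<lambda>y. g y * \<gamma> y ^ Suc k) (at y) \<noteq> (\<lambda>_. 0)})"
    using C by (meson bounded_subset compact_closure compact_imp_bounded)
  ultimately show ?thesis unfolding admissible_gamma_def by simp
qed

lemma test_field_inner_dominated:
  assumes rad: "radon_on U \<mu>" and t: "test_field U \<theta>" and norm\<eta>: "AE x in \<mu>. norm (\<eta> x) = 1"
  obtains w where "integrable (completion \<mu>) w" "AE x in completion \<mu>. \<bar>inner (\<theta> x) (\<eta> x)\<bar> \<le> w x"
proof -
  obtain B where B: "\<And>x. norm (\<theta> x) \<le> B" using test_field_bounded[OF t] by blast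
  define T where "T = support_of \<theta>"
  have T: "compact T" "T \<subseteq> U" using t by (auto simp: test_field_def T_def)
  have "T \<in> sets \<mu>" using rad T(1) by (simp add: radon_on_def compact_imp_closed)
  moreover have "emeasure \<mu> T < \<infinity>" using rad T by (simp add: radon_on_def)
  ultimately have "integrable (completion \<mu>) (\<lambda>x. B * indicator T x)"
    by (intro integrable_mult_right integrable_real_indicator) auto
  moreover have "AE x in completion \<mu>. \<bar>inner (\<theta> x) (\<eta> x)\<bar> \<le> B * indicator T x"
    using AE_completion[OF norm\<eta>]
  proof eventually_elim
    case (elim x)
    show ?case
    proof (cases "x \<in> T")
      case True
      have "\<bar>inner (\<theta> x) (\<eta> x)\<bar> \<le> norm (\<theta> x) * norm (\<eta> x)" by (rule Cauchy_Schwarz_ineq2)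
      then show ?thesis using B[of x] elim True by simp
    qed (simp add: T_def test_field_eq_0)
  qed
  ultimately show ?thesis using that by blast
qed

lemma mult_power_locally_constant:
  fixes g \<gamma> :: "'y::real_normed_vector \<Rightarrow> real"
  assumes "y \<in> interior {y. \<gamma> y = 0} \<union> interior {y. \<gamma> y = 1}"
  shows "g y * \<gamma> y ^ Suc k = (if \<gamma> y = 1 then g y else 0) \<and>
    frechet_derivative (\<lambda>y. g y * \<gamma> y ^ Suc k) (at y) =
      (if \<gamma> y = 1 then frechet_derivative g (at y) else (\<lambda>w. 0))"
proof (cases "y \<in> interior {y. \<gamma> y = 1}")
  case True
  then have "\<gamma> y = 1" using interior_subset by blast
  moreover have "frechet_derivative (\<lambda>y. g y * \<gamma> y ^ Suc k) (at y) = frechet_derivative g (at y)"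
    using True interior_subset[of "{y. \<gamma> y = 1}"]
    by (intro frechet_derivative_eq_on_open[of "interior {y. \<gamma> y = 1}"]) auto
  ultimately show ?thesis by simp
next
  case False
  then have y0: "y \<in> interior {y. \<gamma> y = 0}" using assms by blast
  then have "\<gamma> y = 0" using interior_subset by blast
  moreover have "frechet_derivative (\<lambda>y. g y * \<gamma> y ^ Suc k) (at y) = frechet_derivative (\<lambda>y. 0) (at y)"
    using y0 interior_subset[of "{y. \<gamma> y = 0}"]
    by (intro frechet_derivative_eq_on_open[of "interior {y. \<gamma> y = 0}"]) auto
  ultimately show ?thesis by simp
qed

section \<open>Restricting a varifold\<close>

lemma fst_borel_measurable: "fst \<in> borel_measurable (borel :: ('a::topological_space \<times> 'b::topological_space) measure)"
  by (rule borel_measurable_continuous_onI[OF continuous_on_fst[OF continuous_on_id]])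

lemma Times_UNIV_in_borel:
  "A \<in> sets borel \<Longrightarrow> A \<times> UNIV \<in> sets (borel :: ('a::topological_space \<times> 'b::topological_space) measure)"
  using measurable_sets[OF fst_borel_measurable, of A] by (simp add: vimage_fst)

lemma sets_weight [simp]: "sets (weight V) = sets borel"
  by (simp add: weight_def)

lemma emeasure_weight:
  assumes sV: "sets V = sets borel" and A: "A \<in> sets borel"
  shows "emeasure (weight V) A = emeasure V (A \<times> UNIV)"
proof -
  have "fst \<in> V \<rightarrow>\<^sub>M borel" using fst_borel_measurable measurable_cong_sets[OF sV refl] by blast
  then show ?thesis
    using A sets_eq_imp_space_eq[OF sV] by (simp add: weight_def emeasure_distr vimage_fst)
qed

lemma restr_var_eq_restrict_completion: "restr_var V E = restrict_completion V (E \<times> UNIV)"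
  unfolding restr_var_def restrict_completion_def ..

lemma Times_UNIV_in_sets_completion:
  assumes sV: "sets V = sets borel" and E: "E \<in> sets (completion (weight V))"
  shows "E \<times> UNIV \<in> sets (completion V)"
proof -
  have "fst -` E \<inter> space (completion V) \<in> sets (completion V)"
    using measurable_sets[OF measurable_completion_distr[OF sV fst_borel_measurable]] E
    by (simp add: weight_def)
  then show ?thesis using sets_eq_imp_space_eq[OF sV] by (simp add: vimage_fst)
qed

lemma restr_var_le:
  "sets V = sets borel \<Longrightarrow> E \<in> sets (completion (weight V)) \<Longrightarrow> restr_var V E \<le> V"
  unfolding restr_var_eq_restrict_completion
  by (intro restrict_completion_le Times_UNIV_in_sets_completion)

lemma weight_restr_var_le:
  assumes sV: "sets V = sets borel" and E: "E \<in> sets (completion (weight V))"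
  shows "weight (restr_var V E) \<le> weight V"
  unfolding weight_def using sV fst_borel_measurable measurable_cong_sets[OF sV refl]
  by (intro distr_mono_measure restr_var_le[OF sV E]) (auto simp: restr_var_eq_restrict_completion)

lemma varifold_restr_var:
  assumes V: "varifold U m V" and E: "E \<in> sets (completion (weight V))"
  shows "varifold U m (restr_var V E)"
proof -
  have sV: "sets V = sets borel" using V by (simp add: varifold_def)
  then have "sets (restr_var V E) = sets V" by (simp add: restr_var_eq_restrict_completion)
  then have le: "emeasure (restr_var V E) A \<le> emeasure V A" for A
    by (intro le_measureD3 restr_var_le sV E)
  show ?thesis
    unfolding varifold_def
  proof (intro conjI allI impI)
    show "sets (restr_var V E) = sets borel" by (simp add: restr_var_eq_restrict_completion)
    show "emeasure (restr_var V E) (- (U \<times> grass m)) = 0"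
      using le[of "- (U \<times> grass m)"] V by (simp add: varifold_def)
    show "emeasure (restr_var V E) (C \<times> UNIV) < \<infinity>" if "compact C \<and> C \<subseteq> U" for C
      using le[of "C \<times> UNIV"] V that by (auto simp: varifold_def)
  qed
qed

lemma integral_completion_restr_var:
  fixes g :: "_ \<Rightarrow> real"
  assumes sV: "sets V = sets borel" and E: "E \<in> sets (completion (weight V))"
    and g: "g \<in> borel_measurable (completion V)"
  shows "integral\<^sup>L (completion (restr_var V E)) g = integral\<^sup>L (completion V) (\<lambda>z. indicator E (fst z) * g z)"
  unfolding restr_var_eq_restrict_completion
  using integral_completion_restrict_completion[OF sV Times_UNIV_in_sets_completion[OF sV E] g]
  by (simp add: indicator_def mem_Times_iff)

lemma first_variation_restr_var:
  assumes sV: "sets V = sets borel" and E: "E \<in> sets (completion (weight V))" and t: "test_field U \<theta>"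
  shows "first_variation (restr_var V E) \<theta> =
    integral\<^sup>L (completion V) (\<lambda>(x, P). indicator E x * proj_div \<theta> x P)"
proof -
  have pd: "(\<lambda>z. proj_div \<theta> (fst z) (snd z)) \<in> borel_measurable borel"
    by (rule borel_measurable_continuous_onI[OF continuous_on_proj_div[OF t]])
  then have "first_variation (restr_var V E) \<theta> =
      integral\<^sup>L (completion (restr_var V E)) (\<lambda>z. proj_div \<theta> (fst z) (snd z))"
    unfolding first_variation_def
    using measurable_cong_sets[of "restr_var V E" borel borel borel] pd
    by (subst integral_completion) (auto simp: restr_var_eq_restrict_completion case_prod_unfold)
  also have "\<dots> = integral\<^sup>L (completion V) (\<lambda>(x, P). indicator E x * proj_div \<theta> x P)"
    using measurable_completion[of _ V] measurable_cong_sets[OF sV refl] pd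
    by (subst integral_completion_restr_var[OF sV E]) (auto simp: case_prod_unfold)
  finally show ?thesis .
qed

lemma integral_completion_weight_restr_var:
  fixes h :: "_ \<Rightarrow> real"
  assumes sV: "sets V = sets borel" and E: "E \<in> sets (completion (weight V))"
    and h: "h \<in> borel_measurable (completion (weight V))"
  shows "integral\<^sup>L (completion (weight (restr_var V E))) h =
    integral\<^sup>L (completion (weight V)) (\<lambda>x. indicator E x * h x)"
proof -
  have "integral\<^sup>L (completion (weight (restr_var V E))) h =
      integral\<^sup>L (completion V) (\<lambda>z. indicator (E \<times> UNIV) z * h (fst z))"
    unfolding weight_def restr_var_eq_restrict_completion
    using h sV by (intro integral_completion_distr_restrict_completion Times_UNIV_in_sets_completion
        fst_borel_measurable) (auto simp: E[unfolded weight_def] weight_def)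
  also have "\<dots> = integral\<^sup>L (completion V) (\<lambda>z. indicator E (fst z) * h (fst z))"
    by (simp add: indicator_def mem_Times_iff)
  also have "\<dots> = integral\<^sup>L (completion (weight V)) (\<lambda>x. indicator E x * h x)"
    unfolding weight_def using sV E h
    by (intro integral_completion_distr[symmetric] fst_borel_measurable borel_measurable_times)
      (auto simp: weight_def)
  finally show ?thesis .
qed

lemma null_sets_weight_restr_var:
  assumes sV: "sets V = sets borel" and E: "E \<in> sets (completion (weight V))"
    and A: "A \<inter> E \<in> null_sets (completion (weight V))"
  shows "A \<in> null_sets (completion (weight (restr_var V E)))"
proof -
  let ?W = "restr_var V E"
  have sW: "sets ?W = sets borel" by (simp add: restr_var_eq_restrict_completion)
  obtain S N N' where E_eq: "E = S \<union> N" "N \<subseteq> N'" "N' \<in> null_sets (weight V)" "S \<in> sets (weight V)"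
    using E by (rule sets_completionE)
  have Sb: "- S \<in> sets borel" and N'b: "N' \<in> sets borel"
    using E_eq(3,4) by (auto simp: weight_def)
  have "emeasure (weight ?W) (- S) = emeasure (completion V) ((- S) \<times> UNIV \<inter> E \<times> UNIV)"
    using emeasure_weight[OF sW Sb] emeasure_restrict_completion[OF sV
        Times_UNIV_in_sets_completion[OF sV E] Times_UNIV_in_borel[OF Sb]]
    by (simp add: restr_var_eq_restrict_completion)
  also have "\<dots> \<le> emeasure (completion V) (N' \<times> UNIV)"
    using E_eq(1,2) Times_UNIV_in_borel[OF N'b] sV by (intro emeasure_mono) auto
  also have "\<dots> = emeasure (weight V) N'"
  proof -
    have "N' \<times> UNIV \<in> sets V" using Times_UNIV_in_borel[OF N'b] sV by simp
    then show ?thesis using emeasure_weight[OF sV N'b] by simp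
  qed
  also have "\<dots> = 0" using E_eq(3) by auto
  finally have "- S \<in> null_sets (completion (weight ?W))"
    using Sb by (intro null_sets_completionI) (auto simp: null_sets_def weight_def)
  moreover have "A \<inter> E \<in> null_sets (completion (weight ?W))"
    by (rule null_sets_completion_mono_measure[OF _ weight_restr_var_le[OF sV E] A]) (simp add: weight_def)
  ultimately have "(A \<inter> E) \<union> - S \<in> null_sets (completion (weight ?W))" by blast
  then show ?thesis by (rule null_sets_completion_subset[rotated]) (use E_eq(1) in auto)
qed

lemma radon_on_mono_measure:
  assumes rad: "radon_on U \<mu>" and s\<nu>: "sets \<nu> = sets \<mu>" and le: "\<nu> \<le> \<mu>"
  shows "radon_on U \<nu>"
  unfolding radon_on_def
proof (intro conjI allI impI)
  have le': "emeasure \<nu> A \<le> emeasure \<mu> A" for A by (rule le_measureD3[OF le s\<nu>])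
  show "sets \<nu> = sets borel" using rad s\<nu> by (simp add: radon_on_def)
  show "emeasure \<nu> (- U) = 0" using le'[of "- U"] rad by (simp add: radon_on_def)
  show "emeasure \<nu> C < \<infinity>" if "compact C \<and> C \<subseteq> U" for C
    using le'[of C] rad that by (auto simp: radon_on_def)
qed

lemma fv_rep_restr_var:
  assumes fv: "fv_rep U V \<mu> \<eta>" and sV: "sets V = sets borel" and EU: "E \<subseteq> U"
    and E\<mu>: "E \<in> sets (completion \<mu>)" and EV: "E \<in> sets (completion (weight V))"
    and bz: "boundary_zero U V \<mu> \<eta> E"
  obtains \<eta>' where "fv_rep U (restr_var V E) (restrict_completion \<mu> E) \<eta>'" "AE x in \<mu>. \<eta> x = \<eta>' x"
proof -
  have rad: "radon_on U \<mu>" and \<eta>: "\<eta> \<in> borel_measurable (completion \<mu>)"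
    and norm\<eta>: "AE x in \<mu>. norm (\<eta> x) = 1"
    using fv by (auto simp: fv_rep_def)
  have s\<mu>: "sets \<mu> = sets borel" using rad by (simp add: radon_on_def)
  define \<mu>E where "\<mu>E = restrict_completion \<mu> E"
  have s\<mu>E: "sets \<mu>E = sets \<mu>" using s\<mu> by (simp add: \<mu>E_def)
  have le: "\<mu>E \<le> \<mu>" unfolding \<mu>E_def by (rule restrict_completion_le[OF s\<mu> E\<mu>])
  obtain \<eta>' where \<eta>'\<mu>: "\<eta>' \<in> borel_measurable \<mu>" and ae: "AE x in \<mu>. \<eta> x = \<eta>' x"
    using completion_ex_borel_measurable_euclidean[OF \<eta>] by blast
  have \<eta>'b: "\<eta>' \<in> borel_measurable borel" using \<eta>'\<mu> measurable_cong_sets[OF s\<mu> refl] by blast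
  have "fv_rep U (restr_var V E) \<mu>E \<eta>'"
    unfolding fv_rep_def
  proof (intro conjI allI impI)
    show "radon_on U \<mu>E" by (rule radon_on_mono_measure[OF rad s\<mu>E le])
    show "\<eta>' \<in> borel_measurable (completion \<mu>E)"
      using borel_measurable_sets_borel[OF _ \<eta>'b] s\<mu>E s\<mu> by (intro measurable_completion) auto
    have "AE x in \<mu>. norm (\<eta>' x) = 1" using norm\<eta> ae by eventually_elim simp
    then show "AE x in \<mu>E. norm (\<eta>' x) = 1" by (rule AE_mono_measure[OF s\<mu>E le])
    fix \<theta> assume t: "test_field U \<theta>"
    have ib: "(\<lambda>x. inner (\<theta> x) (\<eta>' x)) \<in> borel_measurable borel"
      using borel_measurable_continuous_onI[OF test_field_continuous[OF t]] \<eta>'b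
      by (rule borel_measurable_inner)
    have "integral\<^sup>L \<mu>E (\<lambda>x. inner (\<theta> x) (\<eta>' x)) = integral\<^sup>L (completion \<mu>E) (\<lambda>x. inner (\<theta> x) (\<eta>' x))"
      using borel_measurable_sets_borel[OF _ ib] by (intro integral_completion[symmetric]) (simp add: \<mu>E_def)
    also have "\<dots> = integral\<^sup>L (completion \<mu>) (\<lambda>x. indicator E x * inner (\<theta> x) (\<eta>' x))"
      unfolding \<mu>E_def using borel_measurable_sets_borel[OF s\<mu> ib]
      by (intro integral_completion_restrict_completion s\<mu> E\<mu> measurable_completion)
    also have "\<dots> = integral\<^sup>L (completion \<mu>) (\<lambda>x. indicator E x * inner (\<theta> x) (\<eta> x))"
      by (rule integral_completion_cong_AE) (use AE_completion[OF ae] in \<open>eventually_elim, simp\<close>)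
    also have "\<dots> = first_variation (restr_var V E) \<theta>"
    proof -
      have "integral\<^sup>L (completion \<mu>) (\<lambda>x. indicator E x * inner (\<theta> x) (\<eta> x))
          - first_variation (restr_var V E) \<theta> = 0"
        using bz t unfolding boundary_zero_def by blast
      then show ?thesis by simp
    qed
    finally show "first_variation (restr_var V E) \<theta> = integral\<^sup>L \<mu>E (\<lambda>x. inner (\<theta> x) (\<eta>' x))" ..
  qed
  then show ?thesis using that ae by (simp add: \<mu>E_def)
qed

section \<open>Generalised weak derivatives\<close>

definition weak_derivative_identity ::
  "'a::euclidean_space set \<Rightarrow> ('a \<times> ('a \<Rightarrow>\<^sub>L 'a)) measure \<Rightarrow> 'a measure \<Rightarrow> ('a \<Rightarrow> 'a) \<Rightarrow>
    ('a \<Rightarrow> 'y::euclidean_space) \<Rightarrow> ('a \<Rightarrow> ('a \<Rightarrow>\<^sub>L 'y)) \<Rightarrow> 'a set \<Rightarrow> bool" where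
  "weak_derivative_identity U V \<mu> \<eta> f F E \<longleftrightarrow>
     (\<forall>\<theta> \<gamma>. test_field U \<theta> \<and> admissible_gamma \<gamma> \<longrightarrow>
        integral\<^sup>L (completion \<mu>) (\<lambda>x. indicator E x * (\<gamma> (f x) * inner (\<theta> x) (\<eta> x)))
        = integral\<^sup>L (completion V) (\<lambda>(x, P). indicator E x * (\<gamma> (f x) * proj_div \<theta> x P))
          + integral\<^sup>L (completion (weight V))
              (\<lambda>x. indicator E x * frechet_derivative \<gamma> (at (f x)) (blinfun_apply (F x) (\<theta> x))))"

definition weak_derivative ::
  "'a::euclidean_space set \<Rightarrow> ('a \<times> ('a \<Rightarrow>\<^sub>L 'a)) measure \<Rightarrow> 'a measure \<Rightarrow> ('a \<Rightarrow> 'a) \<Rightarrow>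
    ('a \<Rightarrow> 'y::euclidean_space) \<Rightarrow> ('a \<Rightarrow> ('a \<Rightarrow>\<^sub>L 'y)) \<Rightarrow> bool" where
  "weak_derivative U V \<mu> \<eta> f F \<longleftrightarrow> fv_rep U V \<mu> \<eta> \<and>
     f \<in> borel_measurable (completion (weight V)) \<and> f \<in> borel_measurable (completion \<mu>) \<and>
     (\<forall>C s. compact C \<and> C \<subseteq> U \<and> 0 \<le> s \<longrightarrow>
        emeasure (completion (weight V)) (C \<inter> {x. norm (f x) > s}) < \<infinity> \<and>
        emeasure (completion \<mu>) (C \<inter> {x. norm (f x) > s}) < \<infinity>) \<and>
     F \<in> borel_measurable (completion (weight V)) \<and>
     (\<forall>C s. compact C \<and> C \<subseteq> U \<and> 0 \<le> s \<longrightarrow>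
        (\<integral>\<^sup>+ x. indicator (C \<inter> {x. norm (f x) \<le> s}) x * ennreal (norm (F x)) \<partial>completion (weight V)) < \<infinity>) \<and>
     weak_derivative_identity U V \<mu> \<eta> f F UNIV"

lemma gen_weakly_diff_iff: "gen_weakly_diff U V f \<longleftrightarrow> (\<exists>\<mu> \<eta> F. weak_derivative U V \<mu> \<eta> f F)"
  unfolding gen_weakly_diff_def weak_derivative_def weak_derivative_identity_def by simp

lemma boundary_zero_if_weak_derivative_identity:
  assumes sV: "sets V = sets borel" and E: "E \<in> sets (completion (weight V))"
    and wdi: "weak_derivative_identity U V \<mu> \<eta> f F E"
  shows "boundary_zero U V \<mu> \<eta> E"
  unfolding boundary_zero_def
proof (intro allI impI)
  fix \<theta> assume t: "test_field U \<theta>"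
  have "integral\<^sup>L (completion \<mu>) (\<lambda>x. indicator E x * (1 * inner (\<theta> x) (\<eta> x)))
      = integral\<^sup>L (completion V) (\<lambda>(x, P). indicator E x * (1 * proj_div \<theta> x P))
        + integral\<^sup>L (completion (weight V))
            (\<lambda>x. indicator E x * frechet_derivative (\<lambda>_. 1) (at (f x)) (blinfun_apply (F x) (\<theta> x)))"
    using wdi t admissible_gamma_const[of 1] unfolding weak_derivative_identity_def by blast
  then have "integral\<^sup>L (completion \<mu>) (\<lambda>x. indicator E x * inner (\<theta> x) (\<eta> x))
      = integral\<^sup>L (completion V) (\<lambda>(x, P). indicator E x * proj_div \<theta> x P)"
    by simp
  then show "integral\<^sup>L (completion \<mu>) (\<lambda>x. indicator E x * inner (\<theta> x) (\<eta> x)) -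
      first_variation (restr_var V E) \<theta> = 0"
    by (simp add: first_variation_restr_var[OF sV E t])
qed

lemma borel_measurable_weak_derivative_integrands:
  fixes f :: "'a::euclidean_space \<Rightarrow> 'y::euclidean_space"
  assumes sV: "sets V = sets borel" and s\<mu>: "sets \<mu> = sets borel"
    and fV: "f \<in> borel_measurable (completion (weight V))" and f\<mu>: "f \<in> borel_measurable (completion \<mu>)"
    and F: "F \<in> borel_measurable (completion (weight V))" and \<eta>: "\<eta> \<in> borel_measurable (completion \<mu>)"
    and t: "test_field U \<theta>" and \<gamma>: "smooth_on UNIV \<gamma>"
  shows "(\<lambda>x. \<gamma> (f x) * inner (\<theta> x) (\<eta> x)) \<in> borel_measurable (completion \<mu>)"
    and "(\<lambda>z. \<gamma> (f (fst z)) * proj_div \<theta> (fst z) (snd z)) \<in> borel_measurable (completion V)"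
    and "(\<lambda>x. frechet_derivative \<gamma> (at (f x)) (blinfun_apply (F x) (\<theta> x)))
      \<in> borel_measurable (completion (weight V))"
proof -
  have \<gamma>b: "\<gamma> \<in> borel_measurable borel"
    by (rule borel_measurable_continuous_onI[OF smooth_on_continuous_on[OF \<gamma>]])
  have \<theta>b: "\<theta> \<in> borel_measurable borel"
    by (rule borel_measurable_continuous_onI[OF test_field_continuous[OF t]])
  have fst: "fst \<in> completion V \<rightarrow>\<^sub>M completion (weight V)"
    using measurable_completion_distr[OF sV fst_borel_measurable] by (simp add: weight_def)
  show "(\<lambda>x. \<gamma> (f x) * inner (\<theta> x) (\<eta> x)) \<in> borel_measurable (completion \<mu>)"
    using measurable_compose[OF f\<mu> \<gamma>b] measurable_completion[OF borel_measurable_sets_borel[OF s\<mu> \<theta>b]] \<eta>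
    by (intro borel_measurable_times borel_measurable_inner)
  show "(\<lambda>z. \<gamma> (f (fst z)) * proj_div \<theta> (fst z) (snd z)) \<in> borel_measurable (completion V)"
    using measurable_compose[OF fst measurable_compose[OF fV \<gamma>b]]
      measurable_completion[OF borel_measurable_sets_borel[OF sV
          borel_measurable_continuous_onI[OF continuous_on_proj_div[OF t]]]]
    by (rule borel_measurable_times)
  show "(\<lambda>x. frechet_derivative \<gamma> (at (f x)) (blinfun_apply (F x) (\<theta> x)))
      \<in> borel_measurable (completion (weight V))"
    using measurable_compose[OF borel_measurable_Pair[OF fV borel_measurable_blinfun_apply[OF F
          measurable_completion[OF borel_measurable_sets_borel[OF sets_weight \<theta>b]]]]
        borel_measurable_continuous_onI[OF continuous_on_frechet_derivative_apply[OF \<gamma>]]]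
    by simp
qed

lemma weak_derivative_identity_restr_var:
  fixes f :: "'a::euclidean_space \<Rightarrow> 'y::euclidean_space"
  assumes sV: "sets V = sets borel" and s\<mu>: "sets \<mu> = sets borel"
    and E\<mu>: "E \<in> sets (completion \<mu>)" and EV: "E \<in> sets (completion (weight V))"
    and fV: "f \<in> borel_measurable (completion (weight V))" and f\<mu>: "f \<in> borel_measurable (completion \<mu>)"
    and F: "F \<in> borel_measurable (completion (weight V))"
    and \<eta>': "\<eta>' \<in> borel_measurable (completion \<mu>)" and ae: "AE x in \<mu>. \<eta> x = \<eta>' x"
    and wdi: "weak_derivative_identity U V \<mu> \<eta> f F E"
  shows "weak_derivative_identity U (restr_var V E) (restrict_completion \<mu> E) \<eta>' f F UNIV"
  unfolding weak_derivative_identity_def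
proof (intro allI impI)
  fix \<theta> :: "'a \<Rightarrow> 'a" and \<gamma> :: "'y \<Rightarrow> real"
  assume t\<gamma>: "test_field U \<theta> \<and> admissible_gamma \<gamma>"
  then have t: "test_field U \<theta>" and \<gamma>: "smooth_on UNIV \<gamma>" by (auto simp: admissible_gamma_def)
  note m = borel_measurable_weak_derivative_integrands[OF sV s\<mu> fV f\<mu> F \<eta>' t \<gamma>]
  have "integral\<^sup>L (completion (restrict_completion \<mu> E)) (\<lambda>x. indicator UNIV x * (\<gamma> (f x) * inner (\<theta> x) (\<eta>' x)))
      = integral\<^sup>L (completion \<mu>) (\<lambda>x. indicator E x * (\<gamma> (f x) * inner (\<theta> x) (\<eta>' x)))"
    using integral_completion_restrict_completion[OF s\<mu> E\<mu> m(1)] by simp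
  also have "\<dots> = integral\<^sup>L (completion \<mu>) (\<lambda>x. indicator E x * (\<gamma> (f x) * inner (\<theta> x) (\<eta> x)))"
    by (rule integral_completion_cong_AE) (use AE_completion[OF ae] in \<open>eventually_elim, simp\<close>)
  also have "\<dots> = integral\<^sup>L (completion V) (\<lambda>(x, P). indicator E x * (\<gamma> (f x) * proj_div \<theta> x P))
      + integral\<^sup>L (completion (weight V))
          (\<lambda>x. indicator E x * frechet_derivative \<gamma> (at (f x)) (blinfun_apply (F x) (\<theta> x)))"
    using wdi t\<gamma> unfolding weak_derivative_identity_def by blast
  also have "integral\<^sup>L (completion V) (\<lambda>(x, P). indicator E x * (\<gamma> (f x) * proj_div \<theta> x P))
      = integral\<^sup>L (completion (restr_var V E)) (\<lambda>(x, P). indicator UNIV x * (\<gamma> (f x) * proj_div \<theta> x P))"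
    using integral_completion_restr_var[OF sV EV m(2)] by (simp add: case_prod_unfold)
  also have "integral\<^sup>L (completion (weight V))
      (\<lambda>x. indicator E x * frechet_derivative \<gamma> (at (f x)) (blinfun_apply (F x) (\<theta> x)))
    = integral\<^sup>L (completion (weight (restr_var V E)))
      (\<lambda>x. indicator UNIV x * frechet_derivative \<gamma> (at (f x)) (blinfun_apply (F x) (\<theta> x)))"
    using integral_completion_weight_restr_var[OF sV EV m(3)] by simp
  finally show "integral\<^sup>L (completion (restrict_completion \<mu> E))
      (\<lambda>x. indicator UNIV x * (\<gamma> (f x) * inner (\<theta> x) (\<eta>' x)))
    = integral\<^sup>L (completion (restr_var V E)) (\<lambda>(x, P). indicator UNIV x * (\<gamma> (f x) * proj_div \<theta> x P))
      + integral\<^sup>L (completion (weight (restr_var V E)))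
          (\<lambda>x. indicator UNIV x * frechet_derivative \<gamma> (at (f x)) (blinfun_apply (F x) (\<theta> x)))" .
qed

lemma weak_derivative_mono_measure:
  assumes wd: "weak_derivative U V \<mu> \<eta> f F"
    and fvW: "fv_rep U W \<nu> \<eta>'" and wdi: "weak_derivative_identity U W \<nu> \<eta>' f F UNIV"
    and swW: "sets (weight W) = sets (weight V)" and lewW: "weight W \<le> weight V"
    and s\<nu>: "sets \<nu> = sets \<mu>" and le\<nu>: "\<nu> \<le> \<mu>"
  shows "weak_derivative U W \<nu> \<eta>' f F"
proof -
  have fV: "f \<in> borel_measurable (completion (weight V))" and f\<mu>: "f \<in> borel_measurable (completion \<mu>)"
    and fin: "\<And>C s. compact C \<Longrightarrow> C \<subseteq> U \<Longrightarrow> 0 \<le> s \<Longrightarrow>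
        emeasure (completion (weight V)) (C \<inter> {x. norm (f x) > s}) < \<infinity> \<and>
        emeasure (completion \<mu>) (C \<inter> {x. norm (f x) > s}) < \<infinity>"
    and F: "F \<in> borel_measurable (completion (weight V))"
    and Fint: "\<And>C s. compact C \<Longrightarrow> C \<subseteq> U \<Longrightarrow> 0 \<le> s \<Longrightarrow>
        (\<integral>\<^sup>+ x. indicator (C \<inter> {x. norm (f x) \<le> s}) x * ennreal (norm (F x)) \<partial>completion (weight V)) < \<infinity>"
    and s\<mu>: "sets \<mu> = sets borel"
    using wd by (auto simp: weak_derivative_def fv_rep_def radon_on_def)
  show ?thesis
    unfolding weak_derivative_def
  proof (intro conjI allI impI fvW wdi)
    show "f \<in> borel_measurable (completion (weight W))"
      by (rule measurable_completion_mono_measure[OF swW lewW fV])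
    show "f \<in> borel_measurable (completion \<nu>)"
      by (rule measurable_completion_mono_measure[OF s\<nu> le\<nu> f\<mu>])
    show "F \<in> borel_measurable (completion (weight W))"
      by (rule measurable_completion_mono_measure[OF swW lewW F])
    fix C and s :: real assume Cs: "compact C \<and> C \<subseteq> U \<and> 0 \<le> s"
    have Cb: "C \<in> sets borel" using Cs by (simp add: compact_imp_closed)
    have level: "C \<inter> {x. norm (f x) > s} = C \<inter> f -` {y. s < norm y}" by auto
    have "emeasure (completion (weight W)) (C \<inter> {x. norm (f x) > s})
        \<le> emeasure (completion (weight V)) (C \<inter> {x. norm (f x) > s})"
      unfolding level
      by (intro emeasure_completion_mono_measure[OF swW lewW] Int_vimage_in_sets_completion fV Cb)
        (auto simp: weight_def open_Collect_less)
    also have "\<dots> < \<infinity>" using fin Cs by blast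
    finally show "emeasure (completion (weight W)) (C \<inter> {x. norm (f x) > s}) < \<infinity>" .
    have "emeasure (completion \<nu>) (C \<inter> {x. norm (f x) > s}) \<le> emeasure (completion \<mu>) (C \<inter> {x. norm (f x) > s})"
      unfolding level
      by (intro emeasure_completion_mono_measure[OF s\<nu> le\<nu>] Int_vimage_in_sets_completion s\<mu> f\<mu> Cb)
        (auto simp: open_Collect_less)
    also have "\<dots> < \<infinity>" using fin Cs by blast
    finally show "emeasure (completion \<nu>) (C \<inter> {x. norm (f x) > s}) < \<infinity>" .
    have "(\<integral>\<^sup>+ x. indicator (C \<inter> {x. norm (f x) \<le> s}) x * ennreal (norm (F x)) \<partial>completion (weight W))
        \<le> (\<integral>\<^sup>+ x. indicator (C \<inter> {x. norm (f x) \<le> s}) x * ennreal (norm (F x)) \<partial>completion (weight V))"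
      unfolding nn_integral_completion by (rule nn_integral_mono_measure[OF swW lewW])
    also have "\<dots> < \<infinity>" using Fint Cs by blast
    finally show "(\<integral>\<^sup>+ x. indicator (C \<inter> {x. norm (f x) \<le> s}) x * ennreal (norm (F x))
        \<partial>completion (weight W)) < \<infinity>" .
  qed
qed

lemma weak_derivative_restr_var:
  assumes wd: "weak_derivative U V \<mu> \<eta> f F" and sV: "sets V = sets borel" and EU: "E \<subseteq> U"
    and E\<mu>: "E \<in> sets (completion \<mu>)" and EV: "E \<in> sets (completion (weight V))"
    and wdi: "weak_derivative_identity U V \<mu> \<eta> f F E"
  obtains \<eta>' where "weak_derivative U (restr_var V E) (restrict_completion \<mu> E) \<eta>' f F"
proof -
  have fv: "fv_rep U V \<mu> \<eta>" and \<eta>: "\<eta> \<in> borel_measurable (completion \<mu>)" and s\<mu>: "sets \<mu> = sets borel"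
    and fV: "f \<in> borel_measurable (completion (weight V))" and f\<mu>: "f \<in> borel_measurable (completion \<mu>)"
    and F: "F \<in> borel_measurable (completion (weight V))"
    using wd by (auto simp: weak_derivative_def fv_rep_def radon_on_def)
  obtain \<eta>' where fvW: "fv_rep U (restr_var V E) (restrict_completion \<mu> E) \<eta>'"
    and ae: "AE x in \<mu>. \<eta> x = \<eta>' x"
    using fv_rep_restr_var[OF fv sV EU E\<mu> EV boundary_zero_if_weak_derivative_identity[OF sV EV wdi]] .
  have \<eta>': "\<eta>' \<in> borel_measurable (completion \<mu>)"
    using borel_measurable_completion_AE_cong[OF \<eta> AE_completion[OF ae]] .
  have "weak_derivative U (restr_var V E) (restrict_completion \<mu> E) \<eta>' f F"
    using s\<mu> by (intro weak_derivative_mono_measure[OF wd fvW weak_derivative_identity_restr_var[OF sV s\<mu> E\<mu> EV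
          fV f\<mu> F \<eta>' ae wdi] _ weight_restr_var_le[OF sV EV] _ restrict_completion_le[OF s\<mu> E\<mu>]])
      (simp_all add: weight_def)
  then show ?thesis by (rule that)
qed

section \<open>Localising to a level set\<close>

lemma bounded_mult_cutoff:
  fixes g \<gamma> :: "'y::real_normed_vector \<Rightarrow> real"
  assumes g: "continuous_on UNIV g" and C: "compact C" and \<gamma>1: "\<And>y. \<bar>\<gamma> y\<bar> \<le> 1"
    and \<gamma>C: "\<And>y. y \<notin> C \<Longrightarrow> \<gamma> y = 0"
  obtains B where "B > 0" "\<And>y. \<bar>\<gamma> y * g y\<bar> \<le> B"
proof -
  obtain B where B: "B > 0" "\<And>y. y \<in> C \<Longrightarrow> norm (g y) \<le> B"
    using compact_imp_bounded[OF compact_continuous_image[OF continuous_on_subset[OF g] C]]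
    unfolding bounded_pos by auto
  have "\<bar>\<gamma> y * g y\<bar> \<le> B" for y
  proof (cases "y \<in> C")
    case True
    then have "\<bar>\<gamma> y\<bar> * \<bar>g y\<bar> \<le> 1 * B" using \<gamma>1[of y] B by (intro mult_mono) auto
    then show ?thesis by (simp add: abs_mult)
  qed (use B \<gamma>C in auto)
  with B(1) show ?thesis using that by blast
qed

lemma tendsto_integral_level_set:
  fixes \<gamma> g :: "'y::euclidean_space \<Rightarrow> real" and f :: "'a::euclidean_space \<Rightarrow> 'y"
  assumes rad: "radon_on U \<mu>" and \<eta>: "\<eta> \<in> borel_measurable (completion \<mu>)"
    and norm\<eta>: "AE x in \<mu>. norm (\<eta> x) = 1" and f: "f \<in> borel_measurable (completion \<mu>)"
    and t: "test_field U \<theta>" and g: "continuous_on UNIV g"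
    and \<gamma>: "continuous_on UNIV \<gamma>" and \<gamma>01: "\<And>y. 0 \<le> \<gamma> y \<and> \<gamma> y \<le> 1"
    and C: "compact C" and \<gamma>C: "\<And>y. y \<notin> C \<Longrightarrow> \<gamma> y = 0"
  shows "(\<lambda>k. \<integral>x. \<gamma> (f x) ^ Suc k * (g (f x) * inner (\<theta> x) (\<eta> x)) \<partial>completion \<mu>)
    \<longlonglongrightarrow> (\<integral>x. indicator (U \<inter> f -` {y. \<gamma> y = 1}) x * (g (f x) * inner (\<theta> x) (\<eta> x)) \<partial>completion \<mu>)"
proof -
  obtain w where w: "integrable (completion \<mu>) w"
    and w_bound: "AE x in completion \<mu>. \<bar>inner (\<theta> x) (\<eta> x)\<bar> \<le> w x"
    using test_field_inner_dominated[OF rad t norm\<eta>] by blast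
  have "\<bar>\<gamma> y\<bar> \<le> 1" for y using \<gamma>01[of y] by simp
  then obtain B where B: "B > 0" "\<And>y. \<bar>\<gamma> y * g y\<bar> \<le> B"
    using bounded_mult_cutoff[of g C \<gamma>] g C \<gamma>C by blast
  have s\<mu>: "sets \<mu> = sets borel" using rad by (simp add: radon_on_def)
  have \<theta>: "\<theta> \<in> borel_measurable (completion \<mu>)"
    by (intro measurable_completion borel_measurable_sets_borel[OF s\<mu>]
        borel_measurable_continuous_onI test_field_continuous[OF t])
  have "(\<lambda>k. \<integral>x. \<gamma> (f x) ^ Suc k * (g (f x) * inner (\<theta> x) (\<eta> x)) \<partial>completion \<mu>)
    \<longlonglongrightarrow> (\<integral>x. indicator {x. \<gamma> (f x) = 1} x * (g (f x) * inner (\<theta> x) (\<eta> x)) \<partial>completion \<mu>)"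
  proof (rule tendsto_integral_power_indicator)
    show "(\<lambda>x. \<gamma> (f x)) \<in> borel_measurable (completion \<mu>)"
      using measurable_compose[OF f borel_measurable_continuous_onI[OF \<gamma>]] .
    show "(\<lambda>x. g (f x) * inner (\<theta> x) (\<eta> x)) \<in> borel_measurable (completion \<mu>)"
      using measurable_compose[OF f borel_measurable_continuous_onI[OF g]] \<theta> \<eta>
      by (intro borel_measurable_times borel_measurable_inner)
    show "integrable (completion \<mu>) (\<lambda>x. B * w x)" using w by simp
    show "AE x in completion \<mu>. \<bar>\<gamma> (f x) * (g (f x) * inner (\<theta> x) (\<eta> x))\<bar> \<le> B * w x"
      using w_bound
    proof eventually_elim
      case (elim x)
      have "\<bar>\<gamma> (f x) * g (f x)\<bar> * \<bar>inner (\<theta> x) (\<eta> x)\<bar> \<le> B * w x"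
        using B(2)[of "f x"] elim B(1) by (intro mult_mono) auto
      then show ?case by (simp add: abs_mult mult.assoc)
    qed
  qed (use \<gamma>01 in auto)
  moreover have "indicator {x. \<gamma> (f x) = 1} x * (g (f x) * inner (\<theta> x) (\<eta> x)) =
      indicator (U \<inter> f -` {y. \<gamma> y = 1}) x * (g (f x) * inner (\<theta> x) (\<eta> x))" for x
    using test_field_eq_0_outside[OF t, of x] by (cases "x \<in> U") (auto simp: indicator_def)
  ultimately show ?thesis by simp
qed

lemma level_set_integrands:
  fixes \<gamma> g :: "'y::euclidean_space \<Rightarrow> real" and f :: "'a::euclidean_space \<Rightarrow> 'y"
  assumes t: "test_field U \<theta>" and gk: "smooth_on UNIV (\<lambda>y. g y * \<gamma> y ^ Suc k)"
    and x: "x \<in> U \<longrightarrow> f x \<in> interior {y. \<gamma> y = 0} \<union> interior {y. \<gamma> y = 1}"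
  shows "g (f x) * \<gamma> (f x) ^ Suc k * proj_div \<theta> x P =
      indicator (U \<inter> f -` {y. \<gamma> y = 1}) x * (g (f x) * proj_div \<theta> x P) \<and>
    frechet_derivative (\<lambda>y. g y * \<gamma> y ^ Suc k) (at (f x)) (blinfun_apply L (\<theta> x)) =
      indicator (U \<inter> f -` {y. \<gamma> y = 1}) x * frechet_derivative g (at (f x)) (blinfun_apply L (\<theta> x))"
proof (cases "x \<in> U")
  case True
  then show ?thesis using x mult_power_locally_constant[of "f x" \<gamma> g k] by auto
next
  case False
  have "linear (frechet_derivative (\<lambda>y. g y * \<gamma> y ^ Suc k) (at (f x)))"
    by (rule has_derivative_linear[OF smooth_on_has_derivative[OF open_UNIV UNIV_I gk]])
  then show ?thesis
    using False proj_div_eq_0_outside[OF t False] test_field_eq_0_outside[OF t False]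
    by (simp add: linear_0)
qed

lemma weak_derivative_identity_mult_power:
  fixes \<gamma> :: "'y::euclidean_space \<Rightarrow> real" and f :: "'a::euclidean_space \<Rightarrow> 'y"
  assumes wd: "weak_derivative U V \<mu> \<eta> f F" and sV: "sets V = sets borel"
    and \<gamma>: "smooth_on UNIV \<gamma>" and C: "compact C" and \<gamma>C: "\<And>y. y \<notin> C \<Longrightarrow> \<gamma> y = 0"
    and ae: "AE x in completion (weight V). x \<in> U \<longrightarrow> f x \<in> interior {y. \<gamma> y = 0} \<union> interior {y. \<gamma> y = 1}"
    and t: "test_field U \<theta>" and g: "admissible_gamma g"
  shows "integral\<^sup>L (completion \<mu>) (\<lambda>x. \<gamma> (f x) ^ Suc k * (g (f x) * inner (\<theta> x) (\<eta> x)))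
    = integral\<^sup>L (completion V) (\<lambda>(x, P). indicator (U \<inter> f -` {y. \<gamma> y = 1}) x * (g (f x) * proj_div \<theta> x P))
      + integral\<^sup>L (completion (weight V)) (\<lambda>x. indicator (U \<inter> f -` {y. \<gamma> y = 1}) x *
          frechet_derivative g (at (f x)) (blinfun_apply (F x) (\<theta> x)))"
    (is "_ = integral\<^sup>L _ (\<lambda>(x, P). indicator ?E x * _) + _")
proof -
  define gk where "gk = (\<lambda>y. g y * \<gamma> y ^ Suc k)"
  have adm: "admissible_gamma gk"
    unfolding gk_def by (rule admissible_gamma_mult_power[OF g \<gamma> C \<gamma>C])
  then have gks: "smooth_on UNIV gk" by (simp add: admissible_gamma_def)
  have "integral\<^sup>L (completion \<mu>) (\<lambda>x. \<gamma> (f x) ^ Suc k * (g (f x) * inner (\<theta> x) (\<eta> x)))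
    = integral\<^sup>L (completion \<mu>) (\<lambda>x. indicator UNIV x * (gk (f x) * inner (\<theta> x) (\<eta> x)))"
    by (simp add: gk_def ac_simps)
  also have "\<dots> = integral\<^sup>L (completion V) (\<lambda>(x, P). indicator UNIV x * (gk (f x) * proj_div \<theta> x P))
    + integral\<^sup>L (completion (weight V))
        (\<lambda>x. indicator UNIV x * frechet_derivative gk (at (f x)) (blinfun_apply (F x) (\<theta> x)))"
    using wd t adm unfolding weak_derivative_def weak_derivative_identity_def by blast
  also have "integral\<^sup>L (completion V) (\<lambda>(x, P). indicator UNIV x * (gk (f x) * proj_div \<theta> x P))
    = integral\<^sup>L (completion V) (\<lambda>(x, P). indicator ?E x * (g (f x) * proj_div \<theta> x P))"
  proof (rule integral_completion_cong_AE)
    show "AE z in completion V. (case z of (x, P) \<Rightarrow> indicator UNIV x * (gk (f x) * proj_div \<theta> x P))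
        = (case z of (x, P) \<Rightarrow> indicator ?E x * (g (f x) * proj_div \<theta> x P))"
      using AE_completion_distrD[OF sV fst_borel_measurable ae[unfolded weight_def]]
    proof eventually_elim
      case (elim z)
      then show ?case
        using level_set_integrands[where g=g and \<gamma>=\<gamma> and f=f and x="fst z" and P="snd z",
            OF t gks[unfolded gk_def] elim]
        by (simp add: case_prod_unfold gk_def)
    qed
  qed
  also have "integral\<^sup>L (completion (weight V))
      (\<lambda>x. indicator UNIV x * frechet_derivative gk (at (f x)) (blinfun_apply (F x) (\<theta> x)))
    = integral\<^sup>L (completion (weight V))
        (\<lambda>x. indicator ?E x * frechet_derivative g (at (f x)) (blinfun_apply (F x) (\<theta> x)))"
  proof (rule integral_completion_cong_AE)
    show "AE x in completion (weight V).
        indicator UNIV x * frechet_derivative gk (at (f x)) (blinfun_apply (F x) (\<theta> x))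
        = indicator ?E x * frechet_derivative g (at (f x)) (blinfun_apply (F x) (\<theta> x))"
      using ae
    proof eventually_elim
      case (elim x)
      then show ?case
        using level_set_integrands[where g=g and \<gamma>=\<gamma> and f=f and L="F x", OF t gks[unfolded gk_def] elim]
        by (simp add: gk_def)
    qed
  qed
  finally show ?thesis .
qed

lemma weak_derivative_identity_level_set:
  fixes \<gamma> :: "'y::euclidean_space \<Rightarrow> real" and f :: "'a::euclidean_space \<Rightarrow> 'y"
  assumes wd: "weak_derivative U V \<mu> \<eta> f F" and sV: "sets V = sets borel"
    and \<gamma>: "smooth_on UNIV \<gamma>" and \<gamma>01: "\<And>y. 0 \<le> \<gamma> y \<and> \<gamma> y \<le> 1"
    and C: "compact C" and \<gamma>C: "\<And>y. y \<notin> C \<Longrightarrow> \<gamma> y = 0"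
    and ae: "AE x in completion (weight V). x \<in> U \<longrightarrow> f x \<in> interior {y. \<gamma> y = 0} \<union> interior {y. \<gamma> y = 1}"
  shows "weak_derivative_identity U V \<mu> \<eta> f F (U \<inter> f -` {y. \<gamma> y = 1})"
  unfolding weak_derivative_identity_def
proof (intro allI impI)
  fix \<theta> :: "'a \<Rightarrow> 'a" and g :: "'y \<Rightarrow> real"
  assume "test_field U \<theta> \<and> admissible_gamma g"
  then have t: "test_field U \<theta>" and g: "admissible_gamma g" by auto
  have lim: "(\<lambda>k. integral\<^sup>L (completion \<mu>) (\<lambda>x. \<gamma> (f x) ^ Suc k * (g (f x) * inner (\<theta> x) (\<eta> x))))
    \<longlonglongrightarrow> integral\<^sup>L (completion \<mu>) (\<lambda>x. indicator (U \<inter> f -` {y. \<gamma> y = 1}) x * (g (f x) * inner (\<theta> x) (\<eta> x)))"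
    using wd t g \<gamma> \<gamma>01 C \<gamma>C
    by (intro tendsto_integral_level_set smooth_on_continuous_on)
      (auto simp: weak_derivative_def fv_rep_def admissible_gamma_def)
  show "integral\<^sup>L (completion \<mu>)
      (\<lambda>x. indicator (U \<inter> f -` {y. \<gamma> y = 1}) x * (g (f x) * inner (\<theta> x) (\<eta> x)))
    = integral\<^sup>L (completion V) (\<lambda>(x, P). indicator (U \<inter> f -` {y. \<gamma> y = 1}) x * (g (f x) * proj_div \<theta> x P))
      + integral\<^sup>L (completion (weight V)) (\<lambda>x. indicator (U \<inter> f -` {y. \<gamma> y = 1}) x *
          frechet_derivative g (at (f x)) (blinfun_apply (F x) (\<theta> x)))" (is "?L = ?R")
  proof -
    have "(\<lambda>k. integral\<^sup>L (completion \<mu>) (\<lambda>x. \<gamma> (f x) ^ Suc k * (g (f x) * inner (\<theta> x) (\<eta> x)))) = (\<lambda>k. ?R)"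
      by (rule ext) (rule weak_derivative_identity_mult_power[OF wd sV \<gamma> C \<gamma>C ae t g])
    with lim have "(\<lambda>k. ?R) \<longlonglongrightarrow> ?L" by simp
    then show ?thesis by (rule LIMSEQ_unique[OF _ tendsto_const])
  qed
qed

lemma level_set_component:
  fixes \<gamma> :: "'y::euclidean_space \<Rightarrow> real" and f :: "'a::euclidean_space \<Rightarrow> 'y"
  assumes U: "open U" and V: "varifold U m V" and f: "gen_weakly_diff U V f"
    and \<gamma>: "smooth_on UNIV \<gamma>" "\<And>y. 0 \<le> \<gamma> y \<and> \<gamma> y \<le> 1"
    and C: "compact C" "\<And>y. y \<notin> C \<Longrightarrow> \<gamma> y = 0"
    and ae: "AE x in completion (weight V). x \<in> U \<longrightarrow> f x \<in> interior {y. \<gamma> y = 0} \<union> interior {y. \<gamma> y = 1}"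
    and pos: "emeasure (completion (weight V)) (U \<inter> f -` {y. \<gamma> y = 1}) > 0"
  shows "partitioned_component U m V (restr_var V (U \<inter> f -` {y. \<gamma> y = 1}))"
    and "gen_weakly_diff U (restr_var V (U \<inter> f -` {y. \<gamma> y = 1})) f"
proof -
  define E where "E = U \<inter> f -` {y. \<gamma> y = 1}"
  have sV: "sets V = sets borel" using V by (simp add: varifold_def)
  obtain \<mu> \<eta> F where wd: "weak_derivative U V \<mu> \<eta> f F" using f by (auto simp: gen_weakly_diff_iff)
  have fv: "fv_rep U V \<mu> \<eta>" and s\<mu>: "sets \<mu> = sets borel"
    and fV: "f \<in> borel_measurable (completion (weight V))" and f\<mu>: "f \<in> borel_measurable (completion \<mu>)"
    using wd by (auto simp: weak_derivative_def fv_rep_def radon_on_def)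
  have level: "{y. \<gamma> y = 1} \<in> sets borel"
    using closed_Collect_eq[OF smooth_on_continuous_on[OF \<gamma>(1)] continuous_on_const] by simp
  have EV: "E \<in> sets (completion (weight V))"
    unfolding E_def by (rule Int_vimage_in_sets_completion[OF _ fV _ level]) (use U in \<open>auto simp: weight_def\<close>)
  have E\<mu>: "E \<in> sets (completion \<mu>)"
    unfolding E_def by (rule Int_vimage_in_sets_completion[OF s\<mu> f\<mu> _ level]) (use U in auto)
  have wdi: "weak_derivative_identity U V \<mu> \<eta> f F E"
    unfolding E_def by (rule weak_derivative_identity_level_set[OF wd sV \<gamma> C ae])
  show "partitioned_component U m V (restr_var V E)"
    unfolding partitioned_component_def meas_set_def
    using fv E\<mu> EV pos boundary_zero_if_weak_derivative_identity[OF sV EV wdi]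
    by (intro exI[of _ E] exI[of _ \<mu>] exI[of _ \<eta>]) (auto simp: E_def)
  obtain \<eta>' where "weak_derivative U (restr_var V E) (restrict_completion \<mu> E) \<eta>' f F"
    using weak_derivative_restr_var[OF wd sV _ E\<mu> EV wdi] by (auto simp: E_def)
  then show "gen_weakly_diff U (restr_var V E) f" by (auto simp: gen_weakly_diff_iff)
qed

theorem mainTheorem4:
  fixes U :: "'a::euclidean_space set" and m :: nat
    and V :: "('a \<times> ('a \<Rightarrow>\<^sub>L 'a)) measure"
    and f :: "'a \<Rightarrow> 'y::euclidean_space" and D K :: "'y set"
  assumes "1 \<le> m" and "m \<le> DIM('a)"
    and "open U"
    and "closed D" and "compact K" and "K \<inter> D = {}"
    and "varifold U m V"
    and "fv_rep U V \<mu> \<eta>"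
    and "absolutely_continuous (weight V) \<mu>"
    and "gen_weakly_diff U V f"
    and "emeasure (completion (weight V)) (U - f -` (D \<union> K)) = 0"
    and "emeasure (completion (weight V)) (U \<inter> f -` K) > 0"
  shows "\<exists>W. varifold U m W \<and> partitioned_component U m V W \<and>
             emeasure (completion (weight W)) (U - f -` K) = 0 \<and>
             gen_weakly_diff U W f"
proof -
  have sV: "sets V = sets borel" using assms(7) by (simp add: varifold_def)
  have fV: "f \<in> borel_measurable (completion (weight V))"
    using assms(10) by (auto simp: gen_weakly_diff_def)
  obtain \<gamma> :: "'y \<Rightarrow> real" and C where \<gamma>: "smooth_on UNIV \<gamma>" "\<And>y. 0 \<le> \<gamma> y \<and> \<gamma> y \<le> 1"
    and K: "K \<subseteq> interior {y. \<gamma> y = 1}" and D: "D \<subseteq> interior {y. \<gamma> y = 0}"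
    and C: "compact C" "\<And>y. y \<notin> C \<Longrightarrow> \<gamma> y = 0"
    using smooth_urysohn_compact_closed[OF assms(5,4,6)] by blast
  define E where "E = U \<inter> f -` {y. \<gamma> y = 1}"
  have "U - f -` (D \<union> K) = U \<inter> f -` (- (D \<union> K))" by auto
  then have null: "U - f -` (D \<union> K) \<in> null_sets (completion (weight V))"
    using assms(3,4,5,11) Int_vimage_in_sets_completion[OF sets_weight fV, of U "- (D \<union> K)"]
    by (auto simp: null_sets_def compact_imp_closed)
  have ae: "AE x in completion (weight V). x \<in> U \<longrightarrow> f x \<in> interior {y. \<gamma> y = 0} \<union> interior {y. \<gamma> y = 1}"
    using AE_not_in[OF null] by eventually_elim (use D K in auto)
  have EV: "E \<in> sets (completion (weight V))"
    unfolding E_def using assms(3) closed_Collect_eq[OF smooth_on_continuous_on[OF \<gamma>(1)] continuous_on_const]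
    by (intro Int_vimage_in_sets_completion[OF sets_weight fV]) auto
  have "U \<inter> f -` K \<subseteq> E" using K interior_subset by (fastforce simp: E_def)
  then have pos: "emeasure (completion (weight V)) E > 0"
    using assms(12) emeasure_mono[OF _ EV] by (metis order.strict_trans2)
  have "(U - f -` K) \<inter> E \<subseteq> U - f -` (D \<union> K)" using D interior_subset by (fastforce simp: E_def)
  then have "U - f -` K \<in> null_sets (completion (weight (restr_var V E)))"
    by (rule null_sets_weight_restr_var[OF sV EV null_sets_completion_subset[OF _ null]])
  then show ?thesis
    using level_set_component[OF assms(3,7,10) \<gamma> C ae pos[unfolded E_def]]
      varifold_restr_var[OF assms(7) EV] by (auto simp: E_def)
qed

end
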